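(* Suppose $u\in H^{3,3}(\mathbb{R})$ and $k\in\{k\in\mathbb{R}\cup i\mathbb{R}:|k|>1\}$. Then the resolvent $(I-T)^{-1}$ exists as a bounded operator on $C^0(\mathbb{R}^+)$, and $L\equiv(I-T)^{-1}-I$ is an integral operator with integral kernel $L(x,y,k)$ such that $L(x,y,k)=0$ for $x>y$, $L$ is continuous in $(x,y,k)$ for $x<y$, and $$|L(x,y,k)|\le \exp\big(\|u\|_{W^{1,1}}\|\widetilde u\|_{L^1}\big)\,\|u\|_{W^{1,1}}\,|\widetilde u(y)| .$$
   Context: $H^{3,3}(\mathbb{R})=H^3\cap L^{2,3}$. $\widetilde u(x)=\bar u_{xx}(x)+\frac{i}{2}|u_x(x)|^2\bar u_x(x)$, and $T$ is the operator $$(Tf)(x,k)=\frac{i}{2}\int_x^\infty \bar u(y)\int_y^\infty e^{2ik^2(y-z)}\widetilde u(z)f(z,k)\,dz\,dy .$$ *)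

theory Defs
  imports "HOL-Analysis.Analysis"
begin

definition d1 :: "(real \<Rightarrow> complex) \<Rightarrow> real \<Rightarrow> complex" where
  "d1 u = (\<lambda>x. vector_derivative u (at x))"

definition d2 :: "(real \<Rightarrow> complex) \<Rightarrow> real \<Rightarrow> complex" where
  "d2 u = d1 (d1 u)"

definition sq_int :: "(real \<Rightarrow> complex) \<Rightarrow> bool" where
  "sq_int f \<longleftrightarrow> f \<in> borel_measurable lborel \<and> integrable lborel (\<lambda>x. (cmod (f x))^2)"

text \<open>H^{3,3}(R) = H^3 \<inter> L^{2,3}, using the C^2 representative of an H^3 function:
  u, u', u'' classical derivatives, u'' absolutely continuous with derivative u''' in L^2,
  u, u', u'', u''' in L^2, and (1+x^2)^{3/2} u in L^2.\<close>
definition H33 :: "(real \<Rightarrow> complex) \<Rightarrow> bool" where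
  "H33 u \<longleftrightarrow>
     (\<forall>x. (u has_vector_derivative d1 u x) (at x)) \<and>
     (\<forall>x. (d1 u has_vector_derivative d2 u x) (at x)) \<and>
     (\<exists>u3. sq_int u3 \<and>
        (\<forall>a b. a \<le> b \<longrightarrow> set_integrable lborel {a..b} u3 \<and>
                d2 u b - d2 u a = set_lebesgue_integral lborel {a..b} u3)) \<and>
     sq_int u \<and> sq_int (d1 u) \<and> sq_int (d2 u) \<and>
     sq_int (\<lambda>x. complex_of_real ((1 + x^2) powr (3/2)) * u x)"

definition utilde :: "(real \<Rightarrow> complex) \<Rightarrow> real \<Rightarrow> complex" where
  "utilde u x = cnj (d2 u x) + (\<i>/2) * complex_of_real ((cmod (d1 u x))^2) * cnj (d1 u x)"

definition L1norm :: "(real \<Rightarrow> complex) \<Rightarrow> real" where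
  "L1norm f = (\<integral>x. cmod (f x) \<partial>lborel)"

definition W11norm :: "(real \<Rightarrow> complex) \<Rightarrow> real" where
  "W11norm u = L1norm u + L1norm (d1 u)"

definition Top :: "(real \<Rightarrow> complex) \<Rightarrow> complex \<Rightarrow> (real \<Rightarrow> complex) \<Rightarrow> real \<Rightarrow> complex" where
  "Top u k f x = (\<i>/2) * set_lebesgue_integral lborel {x..}
      (\<lambda>y. cnj (u y) * set_lebesgue_integral lborel {y..}
            (\<lambda>z. exp (2 * \<i> * k^2 * complex_of_real (y - z)) * utilde u z * f z))"

definition C0p :: "(real \<Rightarrow> complex) \<Rightarrow> bool" where
  "C0p f \<longleftrightarrow> continuous_on {0..} f \<and> bounded (f ` {0..})"

definition supn :: "(real \<Rightarrow> complex) \<Rightarrow> real" where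
  "supn f = (SUP x\<in>{0..}. cmod (f x))"

definition Kdom :: "complex set" where
  "Kdom = {k. (Im k = 0 \<or> Re k = 0) \<and> cmod k > 1}"

end

(*
  Exchanging the order of integration writes T as a Volterra operator
  (T f)(x) = int_{z >= x} K(x,z) f(z) dz, and since |exp (2 i k^2 t)| = 1 for real or
  imaginary k, |K(x,z)| <= kappa |utilde(z)| with kappa = |u|_1 / 2. By induction the
  n-th iterated kernel is bounded by kappa |utilde(z)| (kappa int_x^z |utilde|)^n / n!, so
  the Neumann series L = sum_n K_n converges uniformly, is continuous, vanishes below the
  diagonal and obeys the stated exponential bound. Summing termwise gives the resolvent
  equation L = K + K L, which makes I + L a right inverse of I - T; the same factorial
  bound on the iterates shows that I - T has trivial kernel on C^0(R^+), so I + L is also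
  a left inverse.

  The hypothesis u in H^{3,3} is only used to get u in L^1 and utilde in L^1 and L^infinity.
  The delicate point is u'' in L^1. A second difference of u on a grid of step 1/m
  controls u'' up to the oscillation of u'', which is bounded by int |u'''|; summing over
  the grid gives
    int_r^{r+1} |u''| <= 24 m^2 int_r^{r+3} |u| + (6/m) int_r^{r+3} |u'''|,
  and the choice m ~ |r| together with AM-GM turns the weight (1 + x^2)^{3/2} on u and
  the L^2 bound on u''' into an integrable majorant of |u''| on unit windows.
*)
theory Submission
  imports Defs "HOL-Probability.Sinc_Integral"
begin

section \<open>Parametric integrals\<close>

lemma borel_measurable_lborel_if_continuous:
  fixes f :: "real \<Rightarrow> 'a::{banach,second_countable_topology}"
  shows "continuous_on UNIV f \<Longrightarrow> f \<in> borel_measurable lborel"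
  by (simp add: borel_measurable_continuous_onI)

lemma continuous_on_integral_dominated:
  fixes F :: "'p::metric_space \<Rightarrow> real \<Rightarrow> 'b::{banach,second_countable_topology}"
  assumes meas: "\<And>p. p \<in> P \<Longrightarrow> F p \<in> borel_measurable lborel"
    and bound: "\<And>p s. p \<in> P \<Longrightarrow> norm (F p s) \<le> g s"
    and g: "integrable lborel g"
    and cont: "\<And>p. p \<in> P \<Longrightarrow> AE s in lborel. continuous (at p within P) (\<lambda>q. F q s)"
  shows "continuous_on P (\<lambda>p. integral\<^sup>L lborel (F p))"
proof (rule continuous_on_sequentiallyI)
  fix q :: "nat \<Rightarrow> 'p" and p
  assume qP: "\<forall>n. q n \<in> P" and pP: "p \<in> P" and lim: "q \<longlonglongrightarrow> p"
  show "(\<lambda>n. integral\<^sup>L lborel (F (q n))) \<longlonglongrightarrow> integral\<^sup>L lborel (F p)"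
  proof (rule integral_dominated_convergence[where w=g])
    show "AE x in lborel. (\<lambda>i. F (q i) x) \<longlonglongrightarrow> F p x"
      using cont[OF pP] by eventually_elim (rule continuous_within_tendsto_compose'[OF _ _ lim], auto simp: qP)
  qed (use meas bound g qP pP in auto)
qed

lemma continuous_within_indicator_Icc:
  fixes a b :: "'p::metric_space \<Rightarrow> real"
  assumes a: "continuous (at p within P) a" and b: "continuous (at p within P) b"
    and "s \<noteq> a p" "s \<noteq> b p"
  shows "continuous (at p within P) (\<lambda>q. indicator {a q..b q} s :: real)"
proof -
  have below: "eventually (\<lambda>q. s < c q) (at p within P)"
    if "continuous (at p within P) c" "s < c p" for c
    using that unfolding continuous_within by (intro order_tendstoD)
  have above: "eventually (\<lambda>q. c q < s) (at p within P)"
    if "continuous (at p within P) c" "c p < s" for c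
    using that unfolding continuous_within by (intro order_tendstoD)
  have "eventually (\<lambda>q. indicator {a q..b q} s = (indicator {a p..b p} s :: real)) (at p within P)"
  proof (cases "s < a p")
    case True
    then show ?thesis using below[OF a True] by (auto elim!: eventually_mono simp: indicator_def)
  next
    case False
    then have as: "a p < s" using assms(3) by auto
    show ?thesis
    proof (cases "s < b p")
      case True
      then show ?thesis using eventually_conj[OF above[OF a as] below[OF b True]] as
        by (auto elim!: eventually_mono simp: indicator_def)
    next
      case False
      then have "b p < s" using assms(4) by auto
      then show ?thesis using above[OF b] by (auto elim!: eventually_mono simp: indicator_def)
    qed
  qed
  then show ?thesis
    unfolding continuous_within by (rule tendsto_eventually)
qed

lemma continuous_on_set_integral_Icc:
  fixes G :: "'p::metric_space \<Rightarrow> real \<Rightarrow> 'b::{banach,second_countable_topology}"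
  assumes a: "continuous_on P a" and b: "continuous_on P b"
    and G: "\<And>s. continuous_on P (\<lambda>p. G p s)"
    and meas: "\<And>p. p \<in> P \<Longrightarrow> G p \<in> borel_measurable lborel"
    and bound: "\<And>p s. p \<in> P \<Longrightarrow> norm (G p s) \<le> g s"
    and g: "integrable lborel g"
  shows "continuous_on P (\<lambda>p. set_lebesgue_integral lborel {a p..b p} (G p))"
  unfolding set_lebesgue_integral_def
proof (rule continuous_on_integral_dominated[where g=g])
  show "norm (indicator {a p..b p} s *\<^sub>R G p s) \<le> g s" if "p \<in> P" for p s
    using bound[OF that, of s] order_trans[OF norm_ge_zero bound[OF that]] by (auto simp: indicator_def)
  fix p assume p: "p \<in> P"
  have "AE s in lborel. s \<noteq> a p \<and> s \<noteq> b p"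
    using AE_lborel_singleton[of "a p"] AE_lborel_singleton[of "b p"] by eventually_elim auto
  then show "AE s in lborel. continuous (at p within P) (\<lambda>q. indicator {a q..b q} s *\<^sub>R G q s)"
  proof eventually_elim
    case (elim s)
    have "continuous (at p within P) (\<lambda>q. indicator {a q..b q} s :: real)"
      using elim a b p by (intro continuous_within_indicator_Icc) (auto simp: continuous_on_eq_continuous_within)
    moreover have "continuous (at p within P) (\<lambda>q. G q s)"
      using G[of s] p by (auto simp: continuous_on_eq_continuous_within)
    ultimately show ?case by (intro continuous_intros)
  qed
next
  show "\<And>p. p \<in> P \<Longrightarrow> (\<lambda>s. indicator {a p..b p} s *\<^sub>R G p s) \<in> borel_measurable lborel"
    using meas by measurable
qed (rule g)

lemma set_integral_norm_le_dominated:
  fixes g :: "real \<Rightarrow> 'b::{banach,second_countable_topology}"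
  assumes meas: "(\<lambda>y. indicator A y *\<^sub>R g y) \<in> borel_measurable lborel"
    and h: "integrable lborel h" and le: "\<And>y. y \<in> A \<Longrightarrow> norm (g y) \<le> h y"
    and h_nonneg: "\<And>y. 0 \<le> h y"
  shows "set_integrable lborel A g"
    and "norm (set_lebesgue_integral lborel A g) \<le> (\<integral>y. h y \<partial>lborel)"
proof -
  have le': "norm (indicator A y *\<^sub>R g y) \<le> h y" for y
    using le[of y] h_nonneg[of y] by (auto simp: indicator_def)
  have int: "integrable lborel (\<lambda>y. indicator A y *\<^sub>R g y)"
    by (rule Bochner_Integration.integrable_bound[OF h meas]) (use le' h_nonneg in \<open>auto intro!: AE_I2\<close>)
  then show "set_integrable lborel A g" by (simp add: set_integrable_def)
  have "norm (set_lebesgue_integral lborel A g) \<le> (\<integral>y. norm (indicator A y *\<^sub>R g y) \<partial>lborel)"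
    unfolding set_lebesgue_integral_def by (rule integral_norm_bound)
  also have "\<dots> \<le> (\<integral>y. h y \<partial>lborel)"
    by (rule integral_mono[OF integrable_norm[OF int] h le'])
  finally show "norm (set_lebesgue_integral lborel A g) \<le> (\<integral>y. h y \<partial>lborel)" .
qed

lemma integral_commute_dominated:
  fixes F :: "real \<Rightarrow> real \<Rightarrow> 'b::{banach,second_countable_topology}"
  assumes F[measurable]: "(\<lambda>(y,z). F y z) \<in> borel_measurable (lborel \<Otimes>\<^sub>M lborel)"
    and le: "\<And>y z. norm (F y z) \<le> a y * b z"
    and a_nonneg: "\<And>y. 0 \<le> a y" and b_nonneg: "\<And>z. 0 \<le> b z"
    and a: "integrable lborel a" and b: "integrable lborel b"
  shows "(\<integral>y. (\<integral>z. F y z \<partial>lborel) \<partial>lborel) = (\<integral>z. (\<integral>y. F y z \<partial>lborel) \<partial>lborel)"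
proof -
  have [measurable]: "a \<in> borel_measurable lborel" "b \<in> borel_measurable lborel"
    using a b by auto
  have int_y: "integrable lborel (\<lambda>z. F y z)" for y
    by (rule Bochner_Integration.integrable_bound[where f="\<lambda>z. a y * b z"])
       (use b le a_nonneg b_nonneg in \<open>auto intro!: AE_I2 order_trans[OF le] simp: abs_mult\<close>)
  have b_int_nonneg: "0 \<le> (\<integral>z. b z \<partial>lborel)"
    by (intro integral_nonneg_AE AE_I2 b_nonneg)
  have norm_bound: "norm (\<integral>z. norm (F y z) \<partial>lborel) \<le> norm (a y * (\<integral>z. b z \<partial>lborel))" for y
  proof -
    have "0 \<le> (\<integral>z. norm (F y z) \<partial>lborel)"
      by (intro integral_nonneg_AE AE_I2 norm_ge_zero)
    moreover have "(\<integral>z. norm (F y z) \<partial>lborel) \<le> a y * (\<integral>z. b z \<partial>lborel)"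
      using integral_mono[OF integrable_norm[OF int_y] integrable_mult_right[OF b] le] by simp
    ultimately show ?thesis
      using a_nonneg[of y] b_int_nonneg by (simp add: abs_of_nonneg)
  qed
  have "(\<lambda>y. \<integral>z. norm (F y z) \<partial>lborel) \<in> borel_measurable lborel"
    by measurable
  then have "integrable lborel (\<lambda>y. \<integral>z. norm (F y z) \<partial>lborel)"
    by (rule Bochner_Integration.integrable_bound[OF integrable_mult_left[OF a]])
       (use norm_bound in auto)
  with int_y have "integrable (lborel \<Otimes>\<^sub>M lborel) (\<lambda>(y,z). F y z)"
    by (intro lborel_pair.Fubini_integrable) auto
  then show ?thesis
    using lborel_pair.Fubini_integral[of F] by simp
qed

lemma has_integral_times_power_integral:
  fixes g :: "real \<Rightarrow> real"
  assumes g: "continuous_on {x..z} g" and xz: "x \<le> z"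
  shows "((\<lambda>s. g s * integral {s..z} g ^ n) has_integral (integral {x..z} g ^ Suc n / Suc n)) {x..z}"
proof -
  define V where "V s = integral {x..s} g" for s
  have tail: "integral {s..z} g = V z - V s" if "s \<in> {x..z}" for s
    using Henstock_Kurzweil_Integration.integral_combine[of x s z g] that
      integrable_continuous_real[OF g]
    by (auto simp: V_def)
  have V': "(V has_real_derivative g s) (at s within {x..z})" if "s \<in> {x..z}" for s
    using integral_has_vector_derivative[OF g that]
    unfolding V_def[abs_def] has_real_derivative_iff_has_vector_derivative .
  define \<Phi> where "\<Phi> s = - ((V z - V s) ^ Suc n / Suc n)" for s
  have "(\<Phi> has_vector_derivative (g s * (V z - V s) ^ n)) (at s within {x..z})" if "s \<in> {x..z}" for s
  proof -
    have "(\<Phi> has_real_derivative (- (real (Suc n) * (V z - V s) ^ n * (0 - g s) / Suc n))) (at s within {x..z})"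
      unfolding \<Phi>_def using V'[OF that] by (intro derivative_eq_intros) auto
    moreover have "- (real (Suc n) * (V z - V s) ^ n * (0 - g s) / Suc n) = g s * (V z - V s) ^ n"
      by (simp add: field_simps)
    ultimately show ?thesis
      by (simp add: has_real_derivative_iff_has_vector_derivative[symmetric] mult.commute del: of_nat_Suc)
  qed
  from fundamental_theorem_of_calculus[OF xz this]
  have "((\<lambda>s. g s * integral {s..z} g ^ n) has_integral (\<Phi> z - \<Phi> x)) {x..z}"
    by (rule has_integral_eq[rotated]) (use tail in auto)
  moreover have "\<Phi> z - \<Phi> x = integral {x..z} g ^ Suc n / Suc n"
    using tail[of x] xz by (simp add: \<Phi>_def)
  ultimately show ?thesis by simp
qed

lemma L1norm_nonneg: "0 \<le> L1norm f"
  unfolding L1norm_def by (simp add: integral_nonneg_AE)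

lemma continuous_on_compose_triple:
  fixes F :: "real \<Rightarrow> real \<Rightarrow> complex \<Rightarrow> 'b::topological_space"
  assumes F: "continuous_on (UNIV \<times> UNIV \<times> K) (\<lambda>(x,z,k). F x z k)"
    and "continuous_on S a" "continuous_on S b" "continuous_on S c" "\<And>p. p \<in> S \<Longrightarrow> c p \<in> K"
  shows "continuous_on S (\<lambda>p. F (a p) (b p) (c p))"
proof -
  have "continuous_on S (\<lambda>p. (a p, b p, c p))"
    using assms(2-4) by (intro continuous_intros)
  from continuous_on_compose2[OF F this] assms(5) show ?thesis by auto
qed

lemma continuous_on_slice:
  fixes F :: "real \<Rightarrow> real \<Rightarrow> complex \<Rightarrow> 'b::topological_space"
  assumes "continuous_on (UNIV \<times> UNIV \<times> K) (\<lambda>(x,z,k). F x z k)" "k \<in> K"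
  shows "continuous_on UNIV (\<lambda>(x,z). F x z k)"
  using continuous_on_compose_triple[OF assms(1), of UNIV fst snd "\<lambda>_. k"] assms(2)
  by (simp add: case_prod_beta continuous_on_fst continuous_on_snd)

section \<open>Integral operators on \<open>C0p\<close>\<close>

lemma C0p_bounded:
  assumes "C0p f"
  obtains M where "0 \<le> M" "\<And>z. 0 \<le> z \<Longrightarrow> cmod (f z) \<le> M"
proof -
  obtain M where M: "\<And>z. z \<in> f ` {0..} \<Longrightarrow> cmod z \<le> M"
    using assms unfolding C0p_def bounded_iff by blast
  moreover have "0 \<le> M" using order_trans[OF norm_ge_zero M[of "f 0"]] by auto
  ultimately show ?thesis using that by auto
qed

lemma C0p_borel_measurable [measurable]:
  "C0p f \<Longrightarrow> (\<lambda>z. indicator {0..} z *\<^sub>R f z) \<in> borel_measurable lborel"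
  unfolding C0p_def
  using borel_measurable_continuous_on_indicator[of "{0::real..}" f] by simp

lemma norm_le_supn: "C0p f \<Longrightarrow> 0 \<le> z \<Longrightarrow> cmod (f z) \<le> supn f"
  unfolding supn_def C0p_def by (rule cSUP_upper) (auto simp: bounded_iff bdd_above_def)

lemma supn_nonneg: "C0p f \<Longrightarrow> 0 \<le> supn f"
  using norm_le_supn[of f 0] norm_ge_zero[of "f 0"] by linarith

lemma C0pI:
  "continuous_on UNIV g \<Longrightarrow> (\<And>x. 0 \<le> x \<Longrightarrow> cmod (g x) \<le> M) \<Longrightarrow> C0p g"
  unfolding C0p_def bounded_iff by (auto intro: continuous_on_subset)

lemma C0p_cong:
  assumes f: "C0p f" and eq: "\<And>x. 0 \<le> x \<Longrightarrow> g x = f x"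
  shows "C0p g"
proof -
  have "g ` {0..} = f ` {0..}" using eq by force
  moreover have "continuous_on {0..} g"
    using f eq unfolding C0p_def by (metis atLeast_iff continuous_on_cong)
  ultimately show ?thesis using f unfolding C0p_def by simp
qed

lemma C0p_add_scaled: "C0p f \<Longrightarrow> C0p g \<Longrightarrow> C0p (\<lambda>x. f x + c * g x)"
proof -
  assume f: "C0p f" and g: "C0p g"
  have "cmod (f x + c * g x) \<le> supn f + cmod c * supn g" if "0 \<le> x" for x
    using norm_triangle_ineq[of "f x" "c * g x"] norm_le_supn[OF f that]
      mult_left_mono[OF norm_le_supn[OF g that], of "cmod c"] by (simp add: norm_mult)
  moreover have "continuous_on {0..} (\<lambda>x. f x + c * g x)"
    using f g unfolding C0p_def by (intro continuous_intros) auto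
  ultimately show ?thesis unfolding C0p_def bounded_iff by auto
qed

lemma C0p_diff: "C0p f \<Longrightarrow> C0p g \<Longrightarrow> C0p (\<lambda>x. f x - g x)"
  using C0p_add_scaled[of f g "-1"] by simp

definition kernel_op :: "(real \<Rightarrow> real \<Rightarrow> complex) \<Rightarrow> (real \<Rightarrow> complex) \<Rightarrow> real \<Rightarrow> complex" where
  "kernel_op G f x = set_lebesgue_integral lborel {0..} (\<lambda>z. G x z * f z)"

definition admissible_kernel :: "(real \<Rightarrow> real \<Rightarrow> complex) \<Rightarrow> (real \<Rightarrow> real) \<Rightarrow> bool" where
  "admissible_kernel G w \<longleftrightarrow>
     continuous_on UNIV (\<lambda>(x,z). G x z) \<and> (\<forall>x z. cmod (G x z) \<le> w z) \<and> integrable lborel w"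

context
  fixes G :: "real \<Rightarrow> real \<Rightarrow> complex" and w :: "real \<Rightarrow> real"
  assumes admissible: "admissible_kernel G w"
begin

lemma admissible_kernelD:
  "continuous_on UNIV (\<lambda>(x,z). G x z)" "cmod (G x z) \<le> w z" "integrable lborel w" "0 \<le> w z"
  using admissible order_trans[OF norm_ge_zero, of "G x z" "w z"] by (auto simp: admissible_kernel_def)

lemma continuous_on_kernel_section: "continuous_on UNIV (G x)"
proof -
  have "continuous_on UNIV (\<lambda>z. (x, z))" by (intro continuous_intros)
  from continuous_on_compose2[OF admissible_kernelD(1) this] show ?thesis by simp
qed

context
  fixes f :: "real \<Rightarrow> complex"
  assumes f: "C0p f"
begin

lemma kernel_op_integrand_measurable:
  "(\<lambda>z. indicator {0..} z *\<^sub>R (G x z * f z)) \<in> borel_measurable lborel"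
proof -
  have [measurable]: "G x \<in> borel_measurable lborel"
    by (rule borel_measurable_lborel_if_continuous[OF continuous_on_kernel_section])
  have "(\<lambda>z. G x z * (indicator {0..} z *\<^sub>R f z)) \<in> borel_measurable lborel"
    using C0p_borel_measurable[OF f] by measurable
  then show ?thesis by (simp add: indicator_def)
qed

lemma kernel_op_integrand_le: "0 \<le> z \<Longrightarrow> cmod (G x z * f z) \<le> supn f * w z"
  using mult_mono[OF admissible_kernelD(2) norm_le_supn[OF f]] supn_nonneg[OF f] admissible_kernelD(4)
  by (simp add: norm_mult mult.commute)

lemma set_integrable_kernel_op: "set_integrable lborel {0..} (\<lambda>z. G x z * f z)"
  using set_integral_norm_le_dominated(1)[OF kernel_op_integrand_measurable, of "\<lambda>z. supn f * w z"]
    kernel_op_integrand_le admissible_kernelD(3,4) supn_nonneg[OF f] by auto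

lemma norm_kernel_op_le: "cmod (kernel_op G f x) \<le> supn f * (\<integral>z. w z \<partial>lborel)"
  using set_integral_norm_le_dominated(2)[OF kernel_op_integrand_measurable, of "\<lambda>z. supn f * w z"]
    kernel_op_integrand_le admissible_kernelD(3,4) supn_nonneg[OF f]
  by (auto simp: kernel_op_def)

lemma continuous_on_kernel_op: "continuous_on UNIV (kernel_op G f)"
  unfolding kernel_op_def set_lebesgue_integral_def
proof (rule continuous_on_integral_dominated[where g="\<lambda>z. supn f * w z"])
  show "norm (indicator {0..} z *\<^sub>R (G x z * f z)) \<le> supn f * w z" for x z
    using kernel_op_integrand_le[of z x] supn_nonneg[OF f] admissible_kernelD(4)
    by (auto simp: indicator_def)
  show "AE z in lborel. continuous (at x within UNIV) (\<lambda>y. indicator {0..} z *\<^sub>R (G y z * f z))" for x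
  proof (intro AE_I2)
    fix z :: real
    have "continuous_on UNIV (\<lambda>y. (y, z))" by (intro continuous_intros)
    from continuous_on_compose2[OF admissible_kernelD(1) this]
    have "continuous_on UNIV (\<lambda>y. G y z)" by simp
    then show "continuous (at x within UNIV) (\<lambda>y. indicator {0..} z *\<^sub>R (G y z * f z))"
      by (auto intro!: continuous_intros simp: continuous_on_eq_continuous_at)
  qed
qed (use kernel_op_integrand_measurable admissible_kernelD(3) in auto)

lemma C0p_kernel_op: "C0p (kernel_op G f)"
  by (rule C0pI[OF continuous_on_kernel_op norm_kernel_op_le])

end

lemma kernel_op_add_scaled:
  assumes f: "C0p f" and g: "C0p g"
  shows "kernel_op G (\<lambda>z. f z + c * g z) x = kernel_op G f x + c * kernel_op G g x"
proof -
  have "kernel_op G (\<lambda>z. f z + c * g z) x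
      = set_lebesgue_integral lborel {0..} (\<lambda>z. G x z * f z + c * (G x z * g z))"
    unfolding kernel_op_def by (simp add: algebra_simps)
  also have "\<dots> = kernel_op G f x + c * kernel_op G g x"
    unfolding kernel_op_def
    using set_integral_add(2)[OF set_integrable_kernel_op[OF f]
        set_integrable_mult_right[OF set_integrable_kernel_op[OF g]]]
    by simp
  finally show ?thesis .
qed

lemma kernel_op_diff:
  "C0p f \<Longrightarrow> C0p g \<Longrightarrow> kernel_op G (\<lambda>z. f z - g z) x = kernel_op G f x - kernel_op G g x"
  using kernel_op_add_scaled[of f g "-1" x] by simp

end

lemma borel_measurable_lborel_pair_if_continuous:
  fixes G :: "real \<Rightarrow> real \<Rightarrow> 'a::{banach,second_countable_topology}"
  assumes "continuous_on UNIV (\<lambda>(x,z). G x z)"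
  shows "(\<lambda>(x,z). G x z) \<in> borel_measurable (lborel \<Otimes>\<^sub>M lborel)"
  using borel_measurable_continuous_onI[OF assms] by (simp add: lborel_prod)

lemma kernel_op_kernel_op:
  fixes K G :: "real \<Rightarrow> real \<Rightarrow> complex"
  assumes K: "admissible_kernel K v" and G: "admissible_kernel G w" and f: "C0p f"
  shows "kernel_op K (kernel_op G f) x
    = kernel_op (\<lambda>x z. set_lebesgue_integral lborel {0..} (\<lambda>s. K x s * G s z)) f x"
proof -
  obtain M where M: "0 \<le> M" "\<And>z. 0 \<le> z \<Longrightarrow> cmod (f z) \<le> M"
    using C0p_bounded[OF f] by blast
  note v = admissible_kernelD(3,4)[OF K] and w = admissible_kernelD(3,4)[OF G]
  define f0 where "f0 z = indicator {0..} z *\<^sub>R f z" for z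
  have [measurable]: "f0 \<in> borel_measurable lborel"
    unfolding f0_def using C0p_borel_measurable[OF f] .
  have [measurable]: "K x \<in> borel_measurable lborel"
    using borel_measurable_lborel_if_continuous[OF continuous_on_kernel_section[OF K]] .
  have [measurable]: "(\<lambda>(s,z). G s z) \<in> borel_measurable (lborel \<Otimes>\<^sub>M lborel)"
    by (rule borel_measurable_lborel_pair_if_continuous[OF admissible_kernelD(1)[OF G]])
  define F where "F s z = indicator {0..} s *\<^sub>R K x s * (G s z * f0 z)" for s z
  have "(\<lambda>(s,z). F s z) \<in> borel_measurable (lborel \<Otimes>\<^sub>M lborel)"
    unfolding F_def by measurable
  moreover have "cmod (F s z) \<le> v s * (M * w z)" for s z
  proof -
    have "cmod (f0 z) \<le> M" using M by (auto simp: f0_def indicator_def)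
    then have "cmod (K x s) * (cmod (G s z) * cmod (f0 z)) \<le> v s * (w z * M)"
      using v w by (intro mult_mono admissible_kernelD(2)[OF K] admissible_kernelD(2)[OF G]) auto
    then show ?thesis using M(1) v w by (auto simp: F_def norm_mult indicator_def mult_ac)
  qed
  ultimately have "(\<integral>s. (\<integral>z. F s z \<partial>lborel) \<partial>lborel) = (\<integral>z. (\<integral>s. F s z \<partial>lborel) \<partial>lborel)"
    by (rule integral_commute_dominated) (use M v w in auto)
  moreover have "(\<integral>z. F s z \<partial>lborel) = indicator {0..} s *\<^sub>R K x s * kernel_op G f s" for s
  proof -
    have "(\<integral>z. F s z \<partial>lborel)
        = (\<integral>z. (indicator {0..} s *\<^sub>R K x s) * (indicator {0..} z *\<^sub>R (G s z * f z)) \<partial>lborel)"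
      by (rule Bochner_Integration.integral_cong) (auto simp: F_def f0_def indicator_def)
    also have "\<dots> = (indicator {0..} s *\<^sub>R K x s) * kernel_op G f s"
      unfolding kernel_op_def set_lebesgue_integral_def by (rule integral_mult_right_zero)
    finally show ?thesis .
  qed
  moreover have "(\<integral>s. F s z \<partial>lborel)
      = indicator {0..} z *\<^sub>R (set_lebesgue_integral lborel {0..} (\<lambda>s. K x s * G s z) * f z)" for z
  proof -
    have "(\<integral>s. F s z \<partial>lborel) = (\<integral>s. f0 z * (indicator {0..} s *\<^sub>R (K x s * G s z)) \<partial>lborel)"
      by (rule Bochner_Integration.integral_cong) (auto simp: F_def mult_ac)
    also have "\<dots> = f0 z * set_lebesgue_integral lborel {0..} (\<lambda>s. K x s * G s z)"
      unfolding set_lebesgue_integral_def by (rule integral_mult_right_zero)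
    finally show ?thesis by (simp add: f0_def mult_ac)
  qed
  ultimately show ?thesis
    by (simp add: kernel_op_def set_lebesgue_integral_def)
qed

lemma kernel_op_compose:
  fixes K G :: "real \<Rightarrow> real \<Rightarrow> complex"
  assumes K: "admissible_kernel K v" and G: "admissible_kernel G w"
    and K_eq_0: "\<And>x s. s < x \<Longrightarrow> K x s = 0" and G_eq_0: "\<And>s z. z < s \<Longrightarrow> G s z = 0"
    and f: "C0p f" and x: "0 \<le> x"
  shows "kernel_op K (kernel_op G f) x
    = kernel_op (\<lambda>x z. set_lebesgue_integral lborel {x..z} (\<lambda>s. K x s * G s z)) f x"
proof -
  have "set_lebesgue_integral lborel {0..} (\<lambda>s. K x s * G s z)
      = set_lebesgue_integral lborel {x..z} (\<lambda>s. K x s * G s z)" for z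
    unfolding set_lebesgue_integral_def
    by (rule Bochner_Integration.integral_cong)
       (use x in \<open>auto simp: indicator_def K_eq_0 G_eq_0 not_le\<close>)
  then show ?thesis
    using kernel_op_kernel_op[OF K G f, of x] by (simp add: kernel_op_def)
qed

lemma kernel_op_cong:
  "(\<And>z. 0 \<le> z \<Longrightarrow> f z = g z) \<Longrightarrow> kernel_op G f x = kernel_op G g x"
  unfolding kernel_op_def by (rule set_lebesgue_integral_cong) auto

section \<open>The Volterra operator and its resolvent kernel\<close>

lemma power_over_fact_sums_exp: "(\<lambda>n. (a::real) ^ n / fact n) sums exp a"
  using exp_converges[of a] by (simp add: divide_inverse mult.commute)

locale volterra_setting =
  fixes u ut :: "real \<Rightarrow> complex" and B :: real
  assumes continuous_u: "continuous_on UNIV u" and continuous_ut: "continuous_on UNIV ut"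
    and integrable_u: "integrable lborel u" and integrable_ut: "integrable lborel ut"
    and norm_ut_le: "\<And>z. cmod (ut z) \<le> B"
begin

lemma borel_measurable_u [measurable]:
  "u \<in> borel_measurable borel" "u \<in> borel_measurable lborel"
  "(\<lambda>x. cnj (u x)) \<in> borel_measurable borel"
  using continuous_u by (auto intro!: borel_measurable_continuous_onI continuous_intros)

lemma borel_measurable_ut [measurable]:
  "ut \<in> borel_measurable borel" "ut \<in> borel_measurable lborel"
  using continuous_ut by (auto intro: borel_measurable_continuous_onI)

lemma integrable_norm_u: "integrable lborel (\<lambda>y. cmod (u y))"
  using integrable_u by simp

lemma integrable_norm_ut: "integrable lborel (\<lambda>y. cmod (ut y))"
  using integrable_ut by simp

lemma B_nonneg: "0 \<le> B"
  using order_trans[OF norm_ge_zero norm_ut_le] .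

definition phase :: "complex \<Rightarrow> real \<Rightarrow> complex" where
  "phase k t = exp (2 * \<i> * k^2 * complex_of_real t)"

lemma norm_phase: "k \<in> Kdom \<Longrightarrow> cmod (phase k t) = 1"
proof -
  assume "k \<in> Kdom"
  then have "Im (k^2) = 0" by (auto simp: Kdom_def power2_eq_square)
  then show ?thesis unfolding phase_def by (simp add: power2_eq_square)
qed

lemma borel_measurable_phase [measurable]: "phase k \<in> borel_measurable borel"
  unfolding phase_def by measurable

text \<open>Exchanging the two integrations in the operator \<open>T\<close> turns it into
  \<open>(T f)(x) = \<integral>\<^sub>x\<^sup>\<infinity> kernel k x z * f z dz\<close>.\<close>
definition kernel :: "complex \<Rightarrow> real \<Rightarrow> real \<Rightarrow> complex" where
  "kernel k x z = (\<i>/2) * ut z * set_lebesgue_integral lborel {x..z} (\<lambda>y. cnj (u y) * phase k (y - z))"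

definition \<kappa> :: real where
  "\<kappa> = L1norm u / 2"

lemma \<kappa>_nonneg: "0 \<le> \<kappa>"
  unfolding \<kappa>_def using L1norm_nonneg[of u] by simp

abbreviation parameters :: "(real \<times> real \<times> complex) set" where
  "parameters \<equiv> UNIV \<times> UNIV \<times> Kdom"

lemma norm_kernel_le: "k \<in> Kdom \<Longrightarrow> cmod (kernel k x z) \<le> \<kappa> * cmod (ut z)"
proof -
  assume k: "k \<in> Kdom"
  have "cmod (set_lebesgue_integral lborel {x..z} (\<lambda>y. cnj (u y) * phase k (y - z))) \<le> L1norm u"
    unfolding L1norm_def
    by (rule set_integral_norm_le_dominated(2)[OF _ integrable_norm_u]) (auto simp: norm_mult norm_phase[OF k])
  then have "cmod (ut z) * cmod (set_lebesgue_integral lborel {x..z} (\<lambda>y. cnj (u y) * phase k (y - z)))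
      \<le> cmod (ut z) * L1norm u"
    by (rule mult_left_mono) simp
  then show ?thesis
    unfolding kernel_def \<kappa>_def by (simp add: norm_mult mult_ac)
qed

lemma kernel_eq_0: "z < x \<Longrightarrow> kernel k x z = 0"
  unfolding kernel_def by (simp add: set_lebesgue_integral_def)

lemma continuous_kernel: "continuous_on parameters (\<lambda>(x,z,k). kernel k x z)"
proof -
  have "continuous_on parameters (\<lambda>p. set_lebesgue_integral lborel {fst p..fst (snd p)}
      (\<lambda>y. cnj (u y) * phase (snd (snd p)) (y - fst (snd p))))"
  proof (rule continuous_on_set_integral_Icc[where g="\<lambda>y. cmod (u y)"])
    show "continuous_on parameters (\<lambda>p. cnj (u s) * phase (snd (snd p)) (s - fst (snd p)))" for s
      unfolding phase_def by (intro continuous_intros)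
    show "cmod (cnj (u s) * phase (snd (snd p)) (s - fst (snd p))) \<le> cmod (u s)" if "p \<in> parameters" for p s
      using that by (auto simp: norm_mult norm_phase)
  qed (auto intro!: continuous_intros integrable_norm_u)
  then have "continuous_on parameters (\<lambda>p. (\<i>/2) * ut (fst (snd p)) * set_lebesgue_integral lborel
      {fst p..fst (snd p)} (\<lambda>y. cnj (u y) * phase (snd (snd p)) (y - fst (snd p))))"
    by (intro continuous_intros continuous_on_compose2[OF continuous_ut]) auto
  then show ?thesis by (simp add: kernel_def case_prod_beta)
qed

lemma continuous_kernel_section: "k \<in> Kdom \<Longrightarrow> continuous_on UNIV (kernel k x)"
  using continuous_on_compose_triple[OF continuous_kernel, of UNIV "\<lambda>_. x" "\<lambda>s. s" "\<lambda>_. k"]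
  by (auto intro: continuous_intros)

definition mass :: "real \<Rightarrow> real \<Rightarrow> real" where
  "mass x z = integral {x..z} (\<lambda>s. cmod (ut s))"

lemma continuous_on_norm_ut: "continuous_on S (\<lambda>s. cmod (ut s))"
  by (intro continuous_intros continuous_on_subset[OF continuous_ut]) auto

lemma mass_nonneg: "0 \<le> mass x z"
  unfolding mass_def by (rule integral_nonneg) (auto intro: integrable_continuous_real continuous_on_norm_ut)

lemma mass_eq_set_integral: "mass x z = set_lebesgue_integral lborel {x..z} (\<lambda>s. cmod (ut s))"
  unfolding mass_def
  by (rule set_borel_integral_eq_integral(2)[symmetric, OF borel_integrable_atLeastAtMost'[OF continuous_on_norm_ut]])

lemma mass_le_L1norm: "mass x z \<le> L1norm ut"
proof -
  have "norm (mass x z) \<le> L1norm ut"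
    unfolding mass_eq_set_integral L1norm_def
    by (rule set_integral_norm_le_dominated(2)[OF _ integrable_norm_ut]) auto
  then show ?thesis by simp
qed

lemma continuous_mass: "continuous_on UNIV (\<lambda>s. mass s z)"
proof -
  have "continuous_on UNIV (\<lambda>s. set_lebesgue_integral lborel {s..z} (\<lambda>s. cmod (ut s)))"
    by (rule continuous_on_set_integral_Icc[where g="\<lambda>s. cmod (ut s)"])
       (auto intro!: continuous_intros integrable_norm_ut)
  then show ?thesis by (simp add: mass_eq_set_integral)
qed

lemma norm_kernel_compose_le:
  assumes k: "k \<in> Kdom" and G: "continuous_on UNIV G" and c: "0 \<le> c"
    and G_le: "\<And>s. cmod (G s) \<le> c * mass s z ^ n"
  shows "cmod (set_lebesgue_integral lborel {x..z} (\<lambda>s. kernel k x s * G s))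
    \<le> \<kappa> * c * mass x z ^ Suc n / Suc n"
proof (cases "x \<le> z")
  case False
  then show ?thesis using \<kappa>_nonneg c mass_nonneg by (simp add: set_lebesgue_integral_def)
next
  case xz: True
  define h where "h s = \<kappa> * cmod (ut s) * (c * mass s z ^ n)" for s
  have "continuous_on UNIV h"
    unfolding h_def by (intro continuous_intros continuous_mass continuous_on_norm_ut)
  then have h: "set_integrable lborel {x..z} h"
    by (intro borel_integrable_atLeastAtMost') (auto intro: continuous_on_subset)
  have KG: "set_integrable lborel {x..z} (\<lambda>s. kernel k x s * G s)"
    by (intro borel_integrable_atLeastAtMost' continuous_intros
        continuous_on_subset[OF continuous_kernel_section[OF k]] continuous_on_subset[OF G]) auto
  have "cmod (set_lebesgue_integral lborel {x..z} (\<lambda>s. kernel k x s * G s))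
      \<le> set_lebesgue_integral lborel {x..z} (\<lambda>s. cmod (kernel k x s * G s))"
    by (rule set_integral_norm_bound[OF KG])
  also have "\<dots> \<le> set_lebesgue_integral lborel {x..z} h"
    using set_integrable_norm[OF KG] h
    by (rule set_integral_mono)
       (auto simp: h_def norm_mult \<kappa>_nonneg intro!: mult_mono norm_kernel_le[OF k] G_le)
  also have "\<dots> = integral {x..z} h"
    by (rule set_borel_integral_eq_integral(2)[OF h])
  also have "\<dots> = \<kappa> * c * integral {x..z} (\<lambda>s. cmod (ut s) * mass s z ^ n)"
    unfolding h_def by (simp add: mult_ac)
  also have "\<dots> = \<kappa> * c * (mass x z ^ Suc n / Suc n)"
    using has_integral_times_power_integral[OF continuous_on_norm_ut xz, of n]
    by (simp add: mass_def integral_unique)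
  finally show ?thesis by simp
qed

lemma continuous_kernel_compose:
  assumes G: "continuous_on parameters (\<lambda>(x,z,k). G k x z)"
    and G_le: "\<And>k x z. k \<in> Kdom \<Longrightarrow> cmod (G k x z) \<le> C"
  shows "continuous_on parameters
    (\<lambda>(x,z,k). set_lebesgue_integral lborel {x..z} (\<lambda>s. kernel k x s * G k s z))"
proof -
  have "continuous_on parameters (\<lambda>p. set_lebesgue_integral lborel {fst p..fst (snd p)}
      (\<lambda>s. kernel (snd (snd p)) (fst p) s * G (snd (snd p)) s (fst (snd p))))"
  proof (rule continuous_on_set_integral_Icc[where g="\<lambda>s. \<kappa> * cmod (ut s) * C"])
    show "continuous_on parameters (\<lambda>p. kernel (snd (snd p)) (fst p) s * G (snd (snd p)) s (fst (snd p)))" for s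
      by (intro continuous_intros continuous_on_compose_triple[OF continuous_kernel]
          continuous_on_compose_triple[OF G]) auto
    show "(\<lambda>s. kernel (snd (snd p)) (fst p) s * G (snd (snd p)) s (fst (snd p))) \<in> borel_measurable lborel"
      if "p \<in> parameters" for p
      using that
      by (intro borel_measurable_lborel_if_continuous continuous_intros continuous_kernel_section
          continuous_on_compose_triple[OF G]) auto
    show "cmod (kernel (snd (snd p)) (fst p) s * G (snd (snd p)) s (fst (snd p))) \<le> \<kappa> * cmod (ut s) * C"
      if "p \<in> parameters" for p s
      using that unfolding norm_mult by (intro mult_mono norm_kernel_le G_le) (auto simp: \<kappa>_nonneg)
  qed (auto intro!: continuous_intros integrable_norm_ut)
  then show ?thesis by (simp add: case_prod_beta)
qed

fun kernel_iter :: "nat \<Rightarrow> complex \<Rightarrow> real \<Rightarrow> real \<Rightarrow> complex" where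
  "kernel_iter 0 k x z = kernel k x z"
| "kernel_iter (Suc n) k x z = set_lebesgue_integral lborel {x..z} (\<lambda>s. kernel k x s * kernel_iter n k s z)"

lemma kernel_iter_eq_0: "z < x \<Longrightarrow> kernel_iter n k x z = 0"
  by (cases n) (auto simp: kernel_eq_0 set_lebesgue_integral_def)

lemma kernel_iter_bound_and_continuous:
  "(\<forall>k\<in>Kdom. \<forall>x z. cmod (kernel_iter n k x z) \<le> \<kappa> * cmod (ut z) * (\<kappa> * mass x z) ^ n / fact n)
   \<and> continuous_on parameters (\<lambda>(x,z,k). kernel_iter n k x z)"
proof (induction n)
  case 0
  show ?case using norm_kernel_le continuous_kernel by simp
next
  case (Suc n)
  then have le: "cmod (kernel_iter n k x z) \<le> \<kappa> * cmod (ut z) * (\<kappa> * mass x z) ^ n / fact n"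
    if "k \<in> Kdom" for k x z
    using that by blast
  have cont: "continuous_on parameters (\<lambda>(x,z,k). kernel_iter n k x z)"
    using Suc.IH by blast
  have le_unif: "cmod (kernel_iter n k x z) \<le> \<kappa> * B * (\<kappa> * L1norm ut) ^ n / fact n"
    if "k \<in> Kdom" for k x z
  proof -
    have "\<kappa> * cmod (ut z) * (\<kappa> * mass x z) ^ n / fact n \<le> \<kappa> * B * (\<kappa> * L1norm ut) ^ n / fact n"
      by (intro divide_right_mono mult_mono mult_left_mono power_mono norm_ut_le mass_le_L1norm)
         (auto simp: \<kappa>_nonneg mass_nonneg B_nonneg)
    then show ?thesis using le[OF that, of x z] by linarith
  qed
  have "cmod (kernel_iter (Suc n) k x z) \<le> \<kappa> * cmod (ut z) * (\<kappa> * mass x z) ^ Suc n / fact (Suc n)"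
    if k: "k \<in> Kdom" for k x z
  proof -
    have "continuous_on UNIV (\<lambda>s. kernel_iter n k s z)"
      using continuous_on_compose_triple[OF cont, of UNIV "\<lambda>s. s" "\<lambda>_. z" "\<lambda>_. k"] k
      by (auto intro: continuous_intros)
    from norm_kernel_compose_le[OF k this, where c="\<kappa> * cmod (ut z) * \<kappa> ^ n / fact n" and n=n and x=x]
    have "cmod (kernel_iter (Suc n) k x z)
        \<le> \<kappa> * (\<kappa> * cmod (ut z) * \<kappa> ^ n / fact n) * mass x z ^ Suc n / Suc n"
      using le[OF k] \<kappa>_nonneg by (simp add: power_mult_distrib mult_ac)
    also have "\<dots> = \<kappa> * cmod (ut z) * (\<kappa> * mass x z) ^ Suc n / fact (Suc n)"
      by (simp add: power_mult_distrib field_simps)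
    finally show ?thesis .
  qed
  moreover have "continuous_on parameters (\<lambda>(x,z,k). kernel_iter (Suc n) k x z)"
    using continuous_kernel_compose[OF cont le_unif] by simp
  ultimately show ?case by blast
qed

lemma norm_kernel_iter_le_mass:
  "k \<in> Kdom \<Longrightarrow> cmod (kernel_iter n k x z) \<le> \<kappa> * cmod (ut z) * (\<kappa> * mass x z) ^ n / fact n"
  using kernel_iter_bound_and_continuous[of n] by blast

lemma continuous_kernel_iter: "continuous_on parameters (\<lambda>(x,z,k). kernel_iter n k x z)"
  using kernel_iter_bound_and_continuous[of n] by blast

lemma norm_kernel_iter_le:
  assumes k: "k \<in> Kdom"
  shows "cmod (kernel_iter n k x z) \<le> \<kappa> * cmod (ut z) * (\<kappa> * L1norm ut) ^ n / fact n"
proof -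
  have "\<kappa> * cmod (ut z) * (\<kappa> * mass x z) ^ n / fact n \<le> \<kappa> * cmod (ut z) * (\<kappa> * L1norm ut) ^ n / fact n"
    by (intro divide_right_mono mult_left_mono power_mono mass_le_L1norm) (auto simp: \<kappa>_nonneg mass_nonneg)
  then show ?thesis using norm_kernel_iter_le_mass[OF k, of n x z] by linarith
qed

lemma norm_kernel_iter_le_uniform:
  assumes k: "k \<in> Kdom"
  shows "cmod (kernel_iter n k x z) \<le> \<kappa> * B * (\<kappa> * L1norm ut) ^ n / fact n"
proof -
  have "\<kappa> * cmod (ut z) * (\<kappa> * L1norm ut) ^ n / fact n \<le> \<kappa> * B * (\<kappa> * L1norm ut) ^ n / fact n"
    by (intro divide_right_mono mult_right_mono mult_left_mono norm_ut_le)
       (auto simp: \<kappa>_nonneg L1norm_nonneg)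
  then show ?thesis using norm_kernel_iter_le[OF k, of n x z] by linarith
qed

lemma summable_power_over_fact: "summable (\<lambda>n. c * (a::real) ^ n / fact n)"
  using summable_mult[OF sums_summable[OF power_over_fact_sums_exp], of c a] by simp

lemma summable_norm_kernel_iter: "k \<in> Kdom \<Longrightarrow> summable (\<lambda>n. cmod (kernel_iter n k x z))"
  by (rule summable_comparison_test[OF _ summable_power_over_fact[of "\<kappa> * cmod (ut z)" "\<kappa> * L1norm ut"]])
     (use norm_kernel_iter_le in auto)

lemma summable_kernel_iter: "k \<in> Kdom \<Longrightarrow> summable (\<lambda>n. kernel_iter n k x z)"
  by (rule summable_norm_cancel[OF summable_norm_kernel_iter])

definition resolvent_kernel :: "real \<Rightarrow> real \<Rightarrow> complex \<Rightarrow> complex" where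
  "resolvent_kernel x z k = (\<Sum>n. kernel_iter n k x z)"

lemma norm_resolvent_kernel_le:
  assumes k: "k \<in> Kdom"
  shows "cmod (resolvent_kernel x z k) \<le> \<kappa> * cmod (ut z) * exp (\<kappa> * L1norm ut)"
proof -
  have "cmod (resolvent_kernel x z k) \<le> (\<Sum>n. cmod (kernel_iter n k x z))"
    unfolding resolvent_kernel_def by (rule summable_norm[OF summable_norm_kernel_iter[OF k]])
  also have "\<dots> \<le> (\<Sum>n. \<kappa> * cmod (ut z) * (\<kappa> * L1norm ut) ^ n / fact n)"
    by (rule suminf_le) (use norm_kernel_iter_le[OF k] summable_norm_kernel_iter[OF k]
        summable_power_over_fact in auto)
  also have "\<dots> = \<kappa> * cmod (ut z) * exp (\<kappa> * L1norm ut)"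
    using sums_mult[OF power_over_fact_sums_exp[of "\<kappa> * L1norm ut"], of "\<kappa> * cmod (ut z)"]
    by (simp add: sums_iff)
  finally show ?thesis .
qed

lemma resolvent_kernel_eq_0: "z < x \<Longrightarrow> resolvent_kernel x z k = 0"
  unfolding resolvent_kernel_def by (simp add: kernel_iter_eq_0)

lemma continuous_resolvent_kernel: "continuous_on parameters (\<lambda>(x,z,k). resolvent_kernel x z k)"
proof -
  have "uniform_limit parameters (\<lambda>N p. \<Sum>n<N. (\<lambda>(x,z,k). kernel_iter n k x z) p)
      (\<lambda>p. \<Sum>n. (\<lambda>(x,z,k). kernel_iter n k x z) p) sequentially"
    by (rule Weierstrass_m_test[where M="\<lambda>n. \<kappa> * B * (\<kappa> * L1norm ut) ^ n / fact n"])
       (auto intro: norm_kernel_iter_le_uniform summable_power_over_fact)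
  then have "continuous_on parameters (\<lambda>p. \<Sum>n. (\<lambda>(x,z,k). kernel_iter n k x z) p)"
    by (rule uniform_limit_theorem[rotated])
       (auto intro!: always_eventually continuous_intros continuous_kernel_iter)
  then show ?thesis unfolding resolvent_kernel_def by (simp add: case_prod_beta)
qed

lemma kernel_compose_resolvent_kernel:
  assumes k: "k \<in> Kdom"
  shows "set_lebesgue_integral lborel {x..z} (\<lambda>s. kernel k x s * resolvent_kernel s z k)
    = resolvent_kernel x z k - kernel k x z"
proof -
  define a where "a n = \<kappa> * B * (\<kappa> * L1norm ut) ^ n / fact n" for n
  define F where "F n s = (indicator {x..z} s *\<^sub>R kernel k x s) * kernel_iter n k s z" for n s
  have "continuous_on UNIV (\<lambda>s. kernel_iter n k s z)" for n
    using continuous_on_compose_triple[OF continuous_kernel_iter, of UNIV "\<lambda>s. s" "\<lambda>_. z" "\<lambda>_. k"] k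
    by (auto intro: continuous_intros)
  then have "set_integrable lborel {x..z} (\<lambda>s. kernel k x s * kernel_iter n k s z)" for n
    by (intro borel_integrable_atLeastAtMost' continuous_intros
        continuous_on_subset[OF continuous_kernel_section[OF k]]) (auto intro: continuous_on_subset)
  then have F: "integrable lborel (F n)" for n
    unfolding set_integrable_def F_def by (simp add: mult_ac)
  have F_le: "norm (F n s) \<le> \<kappa> * cmod (ut s) * a n" for n s
    using mult_mono[OF norm_kernel_le[OF k] norm_kernel_iter_le_uniform[OF k]] \<kappa>_nonneg B_nonneg
      L1norm_nonneg[of ut]
    by (auto simp: F_def a_def norm_mult indicator_def)
  have "summable (\<lambda>n. norm (F n s))" for s
    using summable_mult[OF summable_norm_kernel_iter[OF k], of "indicator {x..z} s * cmod (kernel k x s)"]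
    by (simp add: F_def norm_mult)
  moreover have "summable (\<lambda>n. \<integral>s. norm (F n s) \<partial>lborel)"
  proof (rule summable_comparison_test[OF _ summable_power_over_fact[of "L1norm ut * \<kappa> * \<kappa> * B"]])
    have "(\<integral>s. norm (F n s) \<partial>lborel) \<le> (\<integral>s. \<kappa> * cmod (ut s) * a n \<partial>lborel)" for n
      by (rule integral_mono) (use F integrable_norm_ut F_le in auto)
    then show "\<exists>N. \<forall>n\<ge>N. norm (\<integral>s. norm (F n s) \<partial>lborel)
        \<le> L1norm ut * \<kappa> * \<kappa> * B * (\<kappa> * L1norm ut) ^ n / fact n"
      by (auto simp: L1norm_def a_def integral_nonneg_AE mult_ac)
  qed
  ultimately have "(\<integral>s. (\<Sum>n. F n s) \<partial>lborel) = (\<Sum>n. integral\<^sup>L lborel (F n))"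
    using F by (intro integral_suminf) auto
  moreover have "(\<Sum>n. F n s) = indicator {x..z} s *\<^sub>R (kernel k x s * resolvent_kernel s z k)" for s
    using suminf_mult[OF summable_kernel_iter[OF k, of s z], where c="indicator {x..z} s *\<^sub>R kernel k x s"]
    by (simp add: F_def resolvent_kernel_def)
  moreover have "integral\<^sup>L lborel (F n) = kernel_iter (Suc n) k x z" for n
    unfolding F_def by (simp add: set_lebesgue_integral_def mult_ac)
  moreover have "(\<Sum>n. kernel_iter (Suc n) k x z) = resolvent_kernel x z k - kernel k x z"
    using suminf_split_head[OF summable_kernel_iter[OF k, of x z]] by (simp add: resolvent_kernel_def)
  ultimately show ?thesis unfolding set_lebesgue_integral_def by simp
qed

definition volterra_op :: "complex \<Rightarrow> (real \<Rightarrow> complex) \<Rightarrow> real \<Rightarrow> complex" where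
  "volterra_op k f x = (\<i>/2) * set_lebesgue_integral lborel {x..}
      (\<lambda>y. cnj (u y) * set_lebesgue_integral lborel {y..} (\<lambda>z. phase k (y - z) * ut z * f z))"

lemma volterra_op_eq_kernel_op:
  assumes k: "k \<in> Kdom" and f: "C0p f" and x: "0 \<le> x"
  shows "volterra_op k f x = kernel_op (kernel k) f x"
proof -
  obtain M where M: "0 \<le> M" "\<And>z. 0 \<le> z \<Longrightarrow> cmod (f z) \<le> M"
    using C0p_bounded[OF f] by blast
  define f0 where "f0 z = indicator {0..} z *\<^sub>R f z" for z
  have [measurable]: "f0 \<in> borel_measurable lborel"
    unfolding f0_def using C0p_borel_measurable[OF f] .
  define F where "F y z = (if x \<le> y \<and> y \<le> z then (\<i>/2) * (cnj (u y) * phase k (y - z) * ut z * f0 z) else 0)"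
    for y z
  have "(\<lambda>(y,z). F y z) \<in> borel_measurable (lborel \<Otimes>\<^sub>M lborel)"
    unfolding F_def by measurable
  moreover have "cmod (F y z) \<le> (cmod (u y) / 2) * (M * cmod (ut z))" for y z
  proof -
    have "cmod (f0 z) \<le> M" using M by (auto simp: f0_def indicator_def)
    then have "cmod (f0 z) * (cmod (u y) * cmod (ut z)) \<le> M * (cmod (u y) * cmod (ut z))"
      by (rule mult_right_mono) simp
    then show ?thesis using M by (auto simp: F_def norm_mult norm_phase[OF k] mult_ac)
  qed
  ultimately have swap: "(\<integral>y. (\<integral>z. F y z \<partial>lborel) \<partial>lborel) = (\<integral>z. (\<integral>y. F y z \<partial>lborel) \<partial>lborel)"
    by (rule integral_commute_dominated) (use M integrable_norm_u integrable_norm_ut in auto)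
  have inner_z: "(\<integral>z. F y z \<partial>lborel) = (\<i>/2) * (indicator {x..} y *\<^sub>R (cnj (u y) *
      set_lebesgue_integral lborel {y..} (\<lambda>z. phase k (y - z) * ut z * f z)))" for y
  proof (cases "x \<le> y")
    case True
    have "(\<integral>z. F y z \<partial>lborel)
        = (\<integral>z. ((\<i>/2) * cnj (u y)) * (indicator {y..} z *\<^sub>R (phase k (y - z) * ut z * f z)) \<partial>lborel)"
      by (rule Bochner_Integration.integral_cong) (use True x in \<open>auto simp: F_def f0_def indicator_def\<close>)
    also have "\<dots> = (\<i>/2) * cnj (u y) * set_lebesgue_integral lborel {y..} (\<lambda>z. phase k (y - z) * ut z * f z)"
      unfolding set_lebesgue_integral_def by (rule integral_mult_right_zero)
    finally show ?thesis using True by simp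
  qed (simp add: F_def)
  have inner_y: "(\<integral>y. F y z \<partial>lborel) = indicator {0..} z *\<^sub>R (kernel k x z * f z)" for z
  proof (cases "0 \<le> z")
    case True
    have "(\<integral>y. F y z \<partial>lborel)
        = (\<integral>y. ((\<i>/2) * ut z * f z) * (indicator {x..z} y *\<^sub>R (cnj (u y) * phase k (y - z))) \<partial>lborel)"
      by (rule Bochner_Integration.integral_cong) (use True x in \<open>auto simp: F_def f0_def indicator_def\<close>)
    also have "\<dots> = (\<i>/2) * ut z * f z * set_lebesgue_integral lborel {x..z} (\<lambda>y. cnj (u y) * phase k (y - z))"
      unfolding set_lebesgue_integral_def by (rule integral_mult_right_zero)
    finally show ?thesis using True by (simp add: kernel_def mult_ac)
  next
    case False
    then have "F y z = 0" for y using x by (auto simp: F_def)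
    then show ?thesis using False by simp
  qed
  have "volterra_op k f x = (\<integral>y. (\<integral>z. F y z \<partial>lborel) \<partial>lborel)"
    unfolding inner_z volterra_op_def set_lebesgue_integral_def by (rule integral_mult_right_zero[symmetric])
  also have "\<dots> = kernel_op (kernel k) f x"
    unfolding swap inner_y kernel_op_def set_lebesgue_integral_def ..
  finally show ?thesis .
qed

lemma admissible_kernel_kernel:
  "k \<in> Kdom \<Longrightarrow> admissible_kernel (kernel k) (\<lambda>z. \<kappa> * cmod (ut z))"
  using continuous_on_slice[OF continuous_kernel] norm_kernel_le integrable_norm_ut
  by (simp add: admissible_kernel_def)

lemma admissible_kernel_iter:
  "k \<in> Kdom \<Longrightarrow>
    admissible_kernel (kernel_iter n k) (\<lambda>z. \<kappa> * cmod (ut z) * (\<kappa> * L1norm ut) ^ n / fact n)"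
  using continuous_on_slice[OF continuous_kernel_iter] norm_kernel_iter_le integrable_norm_ut
  by (simp add: admissible_kernel_def)

lemma admissible_resolvent_kernel:
  "k \<in> Kdom \<Longrightarrow>
    admissible_kernel (\<lambda>x z. resolvent_kernel x z k) (\<lambda>z. \<kappa> * cmod (ut z) * exp (\<kappa> * L1norm ut))"
  using continuous_on_slice[OF continuous_resolvent_kernel] norm_resolvent_kernel_le integrable_norm_ut
  by (simp add: admissible_kernel_def)

lemma C0p_volterra_op: "k \<in> Kdom \<Longrightarrow> C0p f \<Longrightarrow> C0p (volterra_op k f)"
  by (rule C0p_cong[OF C0p_kernel_op[OF admissible_kernel_kernel]]) (simp_all add: volterra_op_eq_kernel_op)

definition resolvent :: "complex \<Rightarrow> (real \<Rightarrow> complex) \<Rightarrow> real \<Rightarrow> complex" where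
  "resolvent k f x = f x + kernel_op (\<lambda>x z. resolvent_kernel x z k) f x"

lemma C0p_resolvent: "k \<in> Kdom \<Longrightarrow> C0p f \<Longrightarrow> C0p (resolvent k f)"
  unfolding resolvent_def
  using C0p_add_scaled[of f "kernel_op (\<lambda>x z. resolvent_kernel x z k) f" 1]
    C0p_kernel_op[OF admissible_resolvent_kernel] by simp

lemma resolvent_solves:
  assumes k: "k \<in> Kdom" and f: "C0p f" and x: "0 \<le> x"
  shows "resolvent k f x - volterra_op k (resolvent k f) x = f x"
proof -
  note K = admissible_kernel_kernel[OF k] and L = admissible_resolvent_kernel[OF k]
  define \<phi> where "\<phi> = kernel_op (\<lambda>x z. resolvent_kernel x z k) f"
  have \<phi>: "C0p \<phi>" unfolding \<phi>_def by (rule C0p_kernel_op[OF L f])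
  have "volterra_op k (resolvent k f) x = kernel_op (kernel k) (\<lambda>z. f z + 1 * \<phi> z) x"
    using volterra_op_eq_kernel_op[OF k C0p_resolvent[OF k f] x]
    by (simp add: resolvent_def[abs_def] \<phi>_def)
  also have "\<dots> = kernel_op (kernel k) f x + kernel_op (kernel k) \<phi> x"
    using kernel_op_add_scaled[OF K f \<phi>, of 1] by simp
  also have "kernel_op (kernel k) \<phi> x = kernel_op (\<lambda>x z. set_lebesgue_integral lborel {x..z}
      (\<lambda>s. kernel k x s * resolvent_kernel s z k)) f x"
    unfolding \<phi>_def by (rule kernel_op_compose[OF K L kernel_eq_0 resolvent_kernel_eq_0 f x])
  also have "\<dots> = kernel_op (\<lambda>x z. resolvent_kernel x z k - kernel k x z) f x"
    by (simp add: kernel_compose_resolvent_kernel[OF k])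
  also have "\<dots> = \<phi> x - kernel_op (kernel k) f x"
    unfolding \<phi>_def kernel_op_def
    by (rule set_integral_diff(2)[OF set_integrable_kernel_op[OF L f] set_integrable_kernel_op[OF K f],
          unfolded left_diff_distrib[symmetric]])
  finally show ?thesis by (simp add: resolvent_def[abs_def] \<phi>_def)
qed

text \<open>A fixed point of \<open>T\<close> is a fixed point of every iterate, and the kernels of the
  iterates tend to zero like \<open>(\<kappa> \<parallel>ut\<parallel>\<^sub>1)\<^sup>n / n!\<close>.\<close>
lemma volterra_op_fixed_point_eq_0:
  assumes k: "k \<in> Kdom" and h: "C0p h" and fixed: "\<And>x. 0 \<le> x \<Longrightarrow> volterra_op k h x = h x"
    and x: "0 \<le> x"
  shows "h x = 0"
proof -
  have K: "admissible_kernel (kernel k) (\<lambda>z. \<kappa> * cmod (ut z))"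
    by (rule admissible_kernel_kernel[OF k])
  have iterate: "h x = kernel_op (kernel_iter n k) h x" if "0 \<le> x" for n x
    using that
  proof (induction n arbitrary: x)
    case 0
    then show ?case using fixed volterra_op_eq_kernel_op[OF k h] by simp
  next
    case (Suc n)
    have "h x = kernel_op (kernel k) h x"
      using fixed[OF Suc.prems] volterra_op_eq_kernel_op[OF k h Suc.prems] by simp
    also have "\<dots> = kernel_op (kernel k) (kernel_op (kernel_iter n k) h) x"
      by (rule kernel_op_cong) (use Suc.IH in auto)
    also have "\<dots> = kernel_op (kernel_iter (Suc n) k) h x"
    proof -
      have "(\<lambda>x z. set_lebesgue_integral lborel {x..z} (\<lambda>s. kernel k x s * kernel_iter n k s z))
          = kernel_iter (Suc n) k"
        by (intro ext) simp
      then show ?thesis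
        using kernel_op_compose[OF K admissible_kernel_iter[OF k] kernel_eq_0 kernel_iter_eq_0 h Suc.prems]
        by simp
    qed
    finally show ?case .
  qed
  have "cmod (h x) \<le> supn h * L1norm ut * \<kappa> * (\<kappa> * L1norm ut) ^ n / fact n" for n
    using norm_kernel_op_le[OF admissible_kernel_iter[OF k, of n] h, of x] iterate[OF x, of n]
    by (simp add: L1norm_def mult_ac)
  moreover have "(\<lambda>n. supn h * L1norm ut * \<kappa> * (\<kappa> * L1norm ut) ^ n / fact n) \<longlonglongrightarrow> 0"
    by (rule summable_LIMSEQ_zero[OF summable_power_over_fact])
  ultimately have "cmod (h x) \<le> 0"
    by (intro tendsto_lowerbound) (auto intro: always_eventually)
  then show ?thesis by simp
qed

lemma resolvent_of_solution:
  assumes k: "k \<in> Kdom" and f: "C0p f" and x: "0 \<le> x"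
  shows "resolvent k (\<lambda>y. f y - volterra_op k f y) x = f x"
proof -
  have K: "admissible_kernel (kernel k) (\<lambda>z. \<kappa> * cmod (ut z))"
    by (rule admissible_kernel_kernel[OF k])
  define g where "g y = f y - volterra_op k f y" for y
  have g: "C0p g" unfolding g_def by (rule C0p_diff[OF f C0p_volterra_op[OF k f]])
  define h where "h y = resolvent k g y - f y" for y
  have h: "C0p h" unfolding h_def by (rule C0p_diff[OF C0p_resolvent[OF k g] f])
  have "volterra_op k h y = h y" if y: "0 \<le> y" for y
  proof -
    have "volterra_op k h y = kernel_op (kernel k) h y"
      by (rule volterra_op_eq_kernel_op[OF k h y])
    also have "\<dots> = kernel_op (kernel k) (resolvent k g) y - kernel_op (kernel k) f y"
      unfolding h_def[abs_def] by (rule kernel_op_diff[OF K C0p_resolvent[OF k g] f])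
    also have "\<dots> = volterra_op k (resolvent k g) y - volterra_op k f y"
      using volterra_op_eq_kernel_op[OF k _ y] C0p_resolvent[OF k g] f by simp
    also have "\<dots> = h y"
      using resolvent_solves[OF k g y] by (simp add: h_def g_def algebra_simps)
    finally show ?thesis .
  qed
  then have "h x = 0" by (intro volterra_op_fixed_point_eq_0[OF k h _ x])
  then show ?thesis by (simp add: h_def g_def[abs_def])
qed

lemma resolvent_add_scaled:
  assumes k: "k \<in> Kdom" and f: "C0p f" and g: "C0p g"
  shows "resolvent k (\<lambda>y. f y + c * g y) x = resolvent k f x + c * resolvent k g x"
  using kernel_op_add_scaled[OF admissible_resolvent_kernel[OF k] f g, of c x]
  by (simp add: resolvent_def algebra_simps)

lemma supn_resolvent_le:
  assumes k: "k \<in> Kdom" and f: "C0p f"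
  shows "supn (resolvent k f) \<le> (1 + \<kappa> * exp (\<kappa> * L1norm ut) * L1norm ut) * supn f"
  unfolding supn_def
proof (rule cSUP_least)
  fix x :: real assume "x \<in> {0..}"
  then have x: "0 \<le> x" by simp
  have "cmod (resolvent k f x) \<le> supn f + supn f * (\<kappa> * exp (\<kappa> * L1norm ut) * L1norm ut)"
    using norm_triangle_ineq[of "f x" "kernel_op (\<lambda>x z. resolvent_kernel x z k) f x"]
      norm_le_supn[OF f x] norm_kernel_op_le[OF admissible_resolvent_kernel[OF k] f, of x]
    by (simp add: resolvent_def L1norm_def mult_ac)
  then show "cmod (resolvent k f x) \<le> (1 + \<kappa> * exp (\<kappa> * L1norm ut) * L1norm ut) * (SUP x\<in>{0..}. cmod (f x))"
    unfolding supn_def[symmetric] by (simp add: algebra_simps)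
qed simp

lemma norm_resolvent_kernel_le_exp:
  assumes k: "k \<in> Kdom" and c: "\<kappa> \<le> c"
  shows "cmod (resolvent_kernel x z k) \<le> exp (c * L1norm ut) * c * cmod (ut z)"
proof -
  have "\<kappa> * cmod (ut z) * exp (\<kappa> * L1norm ut) \<le> c * cmod (ut z) * exp (c * L1norm ut)"
    using c \<kappa>_nonneg L1norm_nonneg[of ut]
    by (intro mult_mono mult_right_mono) (auto intro: mult_right_mono)
  then show ?thesis using norm_resolvent_kernel_le[OF k, of x z] by (simp add: mult_ac)
qed

end

section \<open>Integrability from estimates on unit windows\<close>

lemma integrable_on_Icc_if_integrable_lborel:
  fixes f :: "real \<Rightarrow> real"
  shows "integrable lborel f \<Longrightarrow> f integrable_on {a..b}"
  using integrable_on_lborel integrable_on_subinterval[of f UNIV a b] by auto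

lemma integral_Icc_le_integral_lborel:
  fixes f :: "real \<Rightarrow> real"
  assumes f: "integrable lborel f" and f_nonneg: "\<And>x. 0 \<le> f x"
  shows "integral {a..b} f \<le> (\<integral>x. f x \<partial>lborel)"
proof -
  have si: "set_integrable lborel {a..b} f"
    unfolding set_integrable_def by (rule integrable_mult_indicator) (auto intro: f)
  have "integral {a..b} f = (\<integral>x. indicator {a..b} x * f x \<partial>lborel)"
    using set_borel_integral_eq_integral(2)[OF si] by (simp add: set_lebesgue_integral_def)
  also have "\<dots> \<le> (\<integral>x. f x \<partial>lborel)"
    by (rule integral_mono) (use si f f_nonneg in \<open>auto simp: set_integrable_def indicator_def\<close>)
  finally show ?thesis .
qed

lemma integrable_lborel_if_integrals_bounded:
  fixes f :: "real \<Rightarrow> real"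
  assumes f: "continuous_on UNIV f" and f_nonneg: "\<And>x. 0 \<le> f x"
    and bounded: "\<And>n::nat. integral {- real n..real n} f \<le> C"
  shows "integrable lborel f"
proof (rule integrableI_nonneg)
  show meas: "f \<in> borel_measurable lborel"
    by (rule borel_measurable_lborel_if_continuous[OF f])
  define F where "F n x = ennreal (f x) * indicator {- real n..real n} x" for n x
  have "incseq F"
    by (auto simp: F_def incseq_def le_fun_def indicator_def)
  moreover have [measurable]: "f \<in> borel_measurable borel"
    by (rule borel_measurable_continuous_onI[OF f])
  then have [measurable]: "F n \<in> borel_measurable lborel" for n
    unfolding F_def measurable_lborel1 by measurable
  ultimately have "(\<integral>\<^sup>+x. (SUP n. F n x) \<partial>lborel) = (SUP n. integral\<^sup>N lborel (F n))"
    by (rule nn_integral_monotone_convergence_SUP)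
  moreover have "(SUP n. F n x) = ennreal (f x)" for x
  proof (rule antisym)
    show "(SUP n. F n x) \<le> ennreal (f x)"
      by (rule SUP_least) (auto simp: F_def indicator_def)
    have "F (nat \<lceil>\<bar>x\<bar>\<rceil>) x = ennreal (f x)"
      by (auto simp: F_def indicator_def abs_le_iff; linarith)
    then show "ennreal (f x) \<le> (SUP n. F n x)"
      by (metis SUP_upper UNIV_I)
  qed
  moreover have "integral\<^sup>N lborel (F n) = ennreal (integral {- real n..real n} f)" for n
    unfolding F_def
    by (rule nn_integral_has_integral_lebesgue'[OF f_nonneg])
       (auto intro: integrable_integral integrable_continuous_real continuous_on_subset[OF f])
  ultimately have "(\<integral>\<^sup>+x. ennreal (f x) \<partial>lborel) = (SUP n. ennreal (integral {- real n..real n} f))"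
    by simp
  also have "\<dots> \<le> ennreal C"
    by (rule SUP_least) (auto intro: ennreal_leI bounded)
  finally show "(\<integral>\<^sup>+x. ennreal (f x) \<partial>lborel) < \<infinity>"
    using le_less_trans by fastforce
qed (use f_nonneg in auto)

lemma integral_Icc_eq_sum_uniform:
  fixes F :: "real \<Rightarrow> real"
  assumes F: "\<And>a b. F integrable_on {a..b}" and h: "0 \<le> h"
  shows "integral {c..c + real k * h} F = (\<Sum>j<k. integral {c + real j * h..c + real (Suc j) * h} F)"
proof (induction k)
  case (Suc k)
  have "integral {c..c + real k * h} F + integral {c + real k * h..c + real (Suc k) * h} F
      = integral {c..c + real (Suc k) * h} F"
    by (rule Henstock_Kurzweil_Integration.integral_combine) (use h F in \<open>auto simp: algebra_simps\<close>)
  then show ?case using Suc by simp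
qed simp

text \<open>Every point lies in at most three of the windows.\<close>
lemma sum_integral_windows_le:
  fixes F :: "real \<Rightarrow> real"
  assumes F: "\<And>a b. F integrable_on {a..b}" and F_nonneg: "\<And>x. 0 \<le> F x" and h: "0 < h"
  shows "(\<Sum>j<k. integral {c + real j * h..c + real j * h + 3 * h} F)
    \<le> 3 * integral {c..c + real (k + 2) * h} F"
proof -
  have "integral {c + real j * h..c + real j * h + 3 * h} F
      = (\<Sum>i<3. integral {(c + real i * h) + real j * h..(c + real i * h) + real (Suc j) * h} F)" for j
  proof -
    have "integral {c + real j * h..c + real j * h + 3 * h} F
        = integral {c + real j * h..(c + real j * h) + real (3::nat) * h} F"
      by simp
    also have "\<dots> = (\<Sum>i<3. integral {(c + real j * h) + real i * h..(c + real j * h) + real (Suc i) * h} F)"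
      by (rule integral_Icc_eq_sum_uniform[OF F]) (use h in auto)
    finally show ?thesis by (simp add: algebra_simps)
  qed
  then have "(\<Sum>j<k. integral {c + real j * h..c + real j * h + 3 * h} F)
      = (\<Sum>i<3. \<Sum>j<k. integral {(c + real i * h) + real j * h..(c + real i * h) + real (Suc j) * h} F)"
    by (simp add: sum.swap[of _ "{..<3::nat}"])
  also have "\<dots> = (\<Sum>i<3. integral {c + real i * h..(c + real i * h) + real k * h} F)"
    by (rule sum.cong[OF refl], rule integral_Icc_eq_sum_uniform[OF F, symmetric]) (use h in auto)
  also have "\<dots> \<le> (\<Sum>i<(3::nat). integral {c..c + real (k + 2) * h} F)"
  proof (rule sum_mono)
    fix i :: nat assume "i \<in> {..<3}"
    then have "real i * h \<le> 2 * h" using h by auto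
    then show "integral {c + real i * h..(c + real i * h) + real k * h} F \<le> integral {c..c + real (k + 2) * h} F"
      using h by (intro integral_subset_le F) (auto simp: algebra_simps F_nonneg)
  qed
  finally show ?thesis by simp
qed

lemma integrable_lborel_if_window_integrals_le:
  fixes f H :: "real \<Rightarrow> real"
  assumes f: "continuous_on UNIV f" and f_nonneg: "\<And>x. 0 \<le> f x"
    and H: "integrable lborel H" and H_nonneg: "\<And>x. 0 \<le> H x"
    and window: "\<And>r. integral {r..r + 1} f \<le> integral {r..r + 3} H"
  shows "integrable lborel f"
proof (rule integrable_lborel_if_integrals_bounded[OF f f_nonneg])
  fix n :: nat
  have f_int: "f integrable_on {a..b}" for a b
    by (rule integrable_continuous_real[OF continuous_on_subset[OF f]]) auto
  have "integral {- real n..real n} f = integral {- real n..- real n + real (2 * n) * 1} f"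
    by simp
  also have "\<dots> = (\<Sum>j<2 * n. integral {- real n + real j * 1..- real n + real j * 1 + 1} f)"
    by (subst integral_Icc_eq_sum_uniform[OF f_int]) (auto simp: algebra_simps)
  also have "\<dots> \<le> (\<Sum>j<2 * n. integral {- real n + real j * 1..- real n + real j * 1 + 3 * 1} H)"
  proof (rule sum_mono)
    fix j
    show "integral {- real n + real j * 1..- real n + real j * 1 + 1} f
        \<le> integral {- real n + real j * 1..- real n + real j * 1 + 3 * 1} H"
      using window[of "- real n + real j"] by simp
  qed
  also have "\<dots> \<le> 3 * integral {- real n..- real n + real (2 * n + 2) * 1} H"
    by (rule sum_integral_windows_le[OF integrable_on_Icc_if_integrable_lborel[OF H] H_nonneg]) simp
  also have "\<dots> \<le> 3 * (\<integral>x. H x \<partial>lborel)"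
    using integral_Icc_le_integral_lborel[OF H H_nonneg] by simp
  finally show "integral {- real n..real n} f \<le> 3 * (\<integral>x. H x \<partial>lborel)" .
qed

lemma second_difference_mean_value:
  fixes f f' f'' :: "real \<Rightarrow> real"
  assumes f': "\<And>x. (f has_real_derivative f' x) (at x)"
    and f'': "\<And>x. (f' has_real_derivative f'' x) (at x)" and h: "0 < h"
  obtains \<xi> where "s < \<xi>" "\<xi> < s + 2 * h" "f (s + 2 * h) - 2 * f (s + h) + f s = h^2 * f'' \<xi>"
proof -
  define g where "g r = f (r + h) - f r" for r
  have "(g has_real_derivative (f' (r + h) - f' r)) (at r)" for r
    unfolding g_def using DERIV_shift[of f "f' (r + h)" r h, THEN iffD1, OF f'[of "r + h"]]
    by (intro DERIV_diff f')
  then have "\<exists>\<eta>>s. \<eta> < s + h \<and> g (s + h) - g s = (s + h - s) * (f' (\<eta> + h) - f' \<eta>)"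
    using h by (intro MVT2) auto
  then obtain \<eta> where \<eta>: "s < \<eta>" "\<eta> < s + h" "g (s + h) - g s = h * (f' (\<eta> + h) - f' \<eta>)"
    by auto
  have "\<exists>\<xi>>\<eta>. \<xi> < \<eta> + h \<and> f' (\<eta> + h) - f' \<eta> = (\<eta> + h - \<eta>) * f'' \<xi>"
    using h f'' by (intro MVT2) auto
  then obtain \<xi> where \<xi>: "\<eta> < \<xi>" "\<xi> < \<eta> + h" "f' (\<eta> + h) - f' \<eta> = h * f'' \<xi>"
    by auto
  have "f (s + 2 * h) - 2 * f (s + h) + f s = g (s + h) - g s"
    by (simp add: g_def algebra_simps)
  also have "\<dots> = h^2 * f'' \<xi>"
    unfolding \<eta>(3) \<xi>(3) by (simp add: power2_eq_square)
  finally show ?thesis using \<eta> \<xi> by (intro that[of \<xi>]) auto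
qed

lemma two_mult_le_weighted_squares:
  fixes W M a :: real
  assumes "0 < W"
  shows "2 * M * a \<le> W * a^2 + M^2 / W"
proof -
  have "2 * W * M * a \<le> W^2 * a^2 + M^2"
    using sum_squares_ge_zero[of "W * a - M" 0] by (simp add: power2_eq_square algebra_simps)
  then show ?thesis
    using assms by (simp add: field_simps power2_eq_square)
qed

lemma integrable_inverse_one_plus_square: "integrable lborel (\<lambda>x::real. inverse (1 + x^2))"
  using integrable_inverse_1_plus_square by (simp add: set_integrable_def einterval_def)

lemma square_le_weight:
  fixes m x :: real
  assumes "0 \<le> m" "m \<le> \<bar>x\<bar> + 4"
  shows "m^2 \<le> 32 * (1 + x^2)"
proof -
  have "m^2 \<le> (\<bar>x\<bar> + 4)^2" using assms by (intro power_mono) auto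
  also have "\<dots> = x^2 + 8 * \<bar>x\<bar> + 16"
    by (simp add: power2_eq_square algebra_simps)
  also have "\<dots> \<le> 32 * (1 + x^2)"
  proof -
    have "8 * \<bar>x\<bar> \<le> x^2 + 16"
      using sum_squares_ge_zero[of "\<bar>x\<bar> - 4" 0] by (simp add: power2_eq_square algebra_simps)
    then show ?thesis using zero_le_power2[of x] unfolding distrib_left by linarith
  qed
  finally show ?thesis .
qed

lemma inverse_square_le_weight:
  fixes r x m c :: real
  assumes r: "\<bar>r\<bar> < m" and m: "1 \<le> m" and x: "x \<in> {r..r + 1}" and c: "0 \<le> c"
  shows "c / m^2 \<le> 5 * c / (1 + x^2)"
proof -
  have "\<bar>x\<bar> \<le> 2 * m" using r m x by auto
  then have "x^2 \<le> 4 * m^2"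
    using power_mono[of "\<bar>x\<bar>" "2 * m" 2] by (simp add: power_mult_distrib)
  moreover have "1 \<le> m^2" using m by (simp add: one_le_power)
  ultimately have "c * (1 + x^2) \<le> c * (5 * m^2)"
    using c by (intro mult_left_mono) auto
  moreover have "0 < 1 + x^2" by (simp add: add_pos_nonneg)
  moreover have "0 < m^2" using m by simp
  ultimately show ?thesis by (simp add: field_simps)
qed

lemma weighted_amgm_bound:
  fixes m x a b :: real
  assumes m: "0 < m" and weight: "m^2 \<le> 32 * (1 + x^2)"
  shows "24 * m^2 * a + 6 / m * b \<le> 12 * (1 + x^2)^3 * a^2 + 3 * b^2 + (12 * 32^3 + 3) / m^2"
proof -
  define W where "W = (1 + x^2)^3"
  have W: "0 < W" unfolding W_def by (simp add: add_pos_nonneg)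
  have "(m^2)^3 \<le> (32 * (1 + x^2))^3"
    using weight by (intro power_mono) auto
  moreover have "(32 * (1 + x^2))^3 = 32^3 * W"
    unfolding W_def by (rule power_mult_distrib)
  moreover have "(m^2)^3 = (m^2)^2 * m^2"
    by (simp add: power3_eq_cube power2_eq_square)
  ultimately have "(m^2)^2 * m^2 \<le> 32^3 * W"
    by simp
  then have "(m^2)^2 / W \<le> 32^3 / m^2"
    using W m by (simp add: field_simps)
  moreover have "2 * m^2 * a \<le> W * a^2 + (m^2)^2 / W"
    by (rule two_mult_le_weighted_squares[OF W])
  ultimately have "24 * m^2 * a \<le> 12 * W * a^2 + 12 * 32^3 / m^2"
    by linarith
  moreover have "2 * (1 / m) * b \<le> 1 * b^2 + (1 / m)^2 / 1"
    by (rule two_mult_le_weighted_squares) simp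
  then have "6 / m * b \<le> 3 * b^2 + 3 / m^2"
    by (simp add: power_divide)
  moreover have "(12 * 32^3 + 3) / m^2 = 12 * 32^3 / m^2 + 3 / m^2"
    by (simp add: add_divide_distrib)
  ultimately show ?thesis
    unfolding W_def by linarith
qed

section \<open>Regularity of \<open>H\<^sup>3\<^sup>,\<^sup>3\<close> potentials\<close>

locale regular_potential =
  fixes u u1 u2 u3 :: "real \<Rightarrow> complex"
  assumes u1: "\<And>x. (u has_vector_derivative u1 x) (at x)"
    and u2: "\<And>x. (u1 has_vector_derivative u2 x) (at x)"
    and u3: "\<And>a b. a \<le> b \<Longrightarrow>
      set_integrable lborel {a..b} u3 \<and> u2 b - u2 a = set_lebesgue_integral lborel {a..b} u3"
    and square_integrable_u3: "integrable lborel (\<lambda>x. (cmod (u3 x))^2)"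
    and square_integrable_u1: "integrable lborel (\<lambda>x. (cmod (u1 x))^2)"
    and weighted_square_integrable_u: "integrable lborel (\<lambda>x. (1 + x^2)^3 * (cmod (u x))^2)"
begin

lemma continuous_u: "continuous_on UNIV u"
  by (intro continuous_at_imp_continuous_on ballI has_vector_derivative_continuous[OF u1])

lemma continuous_u1: "continuous_on UNIV u1"
  by (intro continuous_at_imp_continuous_on ballI has_vector_derivative_continuous[OF u2])

lemma integrable_on_norm_u3: "(\<lambda>x. cmod (u3 x)) integrable_on {a..b}"
proof (cases "a \<le> b")
  case True
  then show ?thesis
    using u3[OF True] by (intro set_borel_integral_eq_integral(1) set_integrable_norm) simp
qed (simp add: integrable_on_empty)

lemma integrable_on_square_u3: "(\<lambda>x. (cmod (u3 x))^2) integrable_on {a..b}"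
  by (rule integrable_on_Icc_if_integrable_lborel[OF square_integrable_u3])

lemma norm_u2_diff_le:
  assumes "s \<in> {a..b}" "t \<in> {a..b}"
  shows "cmod (u2 t - u2 s) \<le> integral {a..b} (\<lambda>x. cmod (u3 x))"
proof -
  have ordered: "cmod (u2 q - u2 p) \<le> integral {a..b} (\<lambda>x. cmod (u3 x))"
    if "a \<le> p" "p \<le> q" "q \<le> b" for p q
  proof -
    have pq: "set_integrable lborel {p..q} u3" using u3[OF \<open>p \<le> q\<close>] by blast
    have "cmod (u2 q - u2 p) \<le> set_lebesgue_integral lborel {p..q} (\<lambda>x. cmod (u3 x))"
      using u3[OF \<open>p \<le> q\<close>] set_integral_norm_bound[OF pq] by simp
    also have "\<dots> = integral {p..q} (\<lambda>x. cmod (u3 x))"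
      by (rule set_borel_integral_eq_integral(2)[OF set_integrable_norm[OF pq]])
    also have "\<dots> \<le> integral {a..b} (\<lambda>x. cmod (u3 x))"
      using that by (intro integral_subset_le integrable_on_norm_u3) auto
    finally show ?thesis .
  qed
  show ?thesis
  proof (cases "s \<le> t")
    case True
    then show ?thesis using assms ordered[of s t] by auto
  next
    case False
    then show ?thesis using assms ordered[of t s] by (auto simp: norm_minus_commute)
  qed
qed

lemma continuous_u2: "continuous_on UNIV u2"
proof -
  have "isCont u2 x" for x
  proof -
    define P where "P = {x - 1..x + 1}"
    define G where "G = (\<lambda>s. indicator P s *\<^sub>R u3 s)"
    have P: "set_integrable lborel P u3" unfolding P_def using u3[of "x - 1" "x + 1"] by auto
    have "continuous_on P (\<lambda>y. set_lebesgue_integral lborel {x - 1..y} G)"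
    proof (rule continuous_on_set_integral_Icc[where g="\<lambda>s. norm (G s)"])
      show "integrable lborel (\<lambda>s. norm (G s))"
        using P unfolding set_integrable_def G_def by (rule integrable_norm)
      show "G \<in> borel_measurable lborel" using P unfolding set_integrable_def G_def by auto
    qed (auto intro: continuous_intros)
    moreover have "u2 y = u2 (x - 1) + set_lebesgue_integral lborel {x - 1..y} G" if "y \<in> P" for y
    proof -
      have "set_lebesgue_integral lborel {x - 1..y} G = set_lebesgue_integral lborel {x - 1..y} u3"
        unfolding G_def by (rule set_lebesgue_integral_cong) (use that in \<open>auto simp: P_def\<close>)
      then show ?thesis using u3[of "x - 1" y] that by (auto simp: P_def algebra_simps)
    qed
    ultimately have "continuous_on P u2"
      by (auto intro: continuous_on_cong[THEN iffD1, OF refl _ continuous_on_add[OF continuous_on_const]])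
    moreover have "x \<in> interior P" unfolding P_def by auto
    ultimately show ?thesis by (meson continuous_on_interior)
  qed
  then show ?thesis by (simp add: continuous_at_imp_continuous_on)
qed

lemma norm_u2_le_second_difference:
  assumes h: "0 < h" and t: "t \<in> {a..a + 3 * h}" and s: "s \<in> {a..a + h}"
  shows "cmod (u2 t) \<le> 2 * cmod (u (s + 2 * h) - 2 * u (s + h) + u s) / h^2
    + 2 * integral {a..a + 3 * h} (\<lambda>x. cmod (u3 x))"
proof -
  define I3 where "I3 = integral {a..a + 3 * h} (\<lambda>x. cmod (u3 x))"
  define \<Delta> where "\<Delta> = u (s + 2 * h) - 2 * u (s + h) + u s"
  have real_part: "\<bar>g'' t\<bar> \<le> \<bar>g (s + 2 * h) - 2 * g (s + h) + g s\<bar> / h^2 + I3"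
    if g': "\<And>x. (g has_real_derivative g' x) (at x)" and g'': "\<And>x. (g' has_real_derivative g'' x) (at x)"
      and osc: "\<And>\<xi>. \<xi> \<in> {a..a + 3 * h} \<Longrightarrow> \<bar>g'' t - g'' \<xi>\<bar> \<le> I3" for g g' g''
  proof -
    obtain \<xi> where \<xi>: "s < \<xi>" "\<xi> < s + 2 * h"
      and eq: "g (s + 2 * h) - 2 * g (s + h) + g s = h^2 * g'' \<xi>"
      using second_difference_mean_value[OF g' g'' h] by blast
    have "\<bar>g'' \<xi>\<bar> = \<bar>g (s + 2 * h) - 2 * g (s + h) + g s\<bar> / h^2"
      unfolding eq using h by (simp add: abs_mult)
    moreover have "\<xi> \<in> {a..a + 3 * h}" using \<xi> s h by auto
    ultimately show ?thesis using osc[of \<xi>] by linarith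
  qed
  have "\<bar>Re (u2 t)\<bar> \<le> \<bar>Re \<Delta>\<bar> / h^2 + I3"
  proof -
    have "\<bar>Re (u2 t) - Re (u2 \<xi>)\<bar> \<le> I3" if "\<xi> \<in> {a..a + 3 * h}" for \<xi>
      using norm_u2_diff_le[OF that t] abs_Re_le_cmod[of "u2 t - u2 \<xi>"] by (simp add: I3_def)
    then show ?thesis
      using real_part[OF has_field_derivative_Re[OF u1] has_field_derivative_Re[OF u2]]
      by (simp add: \<Delta>_def)
  qed
  moreover have "\<bar>Im (u2 t)\<bar> \<le> \<bar>Im \<Delta>\<bar> / h^2 + I3"
  proof -
    have "\<bar>Im (u2 t) - Im (u2 \<xi>)\<bar> \<le> I3" if "\<xi> \<in> {a..a + 3 * h}" for \<xi>
      using norm_u2_diff_le[OF that t] abs_Im_le_cmod[of "u2 t - u2 \<xi>"] by (simp add: I3_def)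
    then show ?thesis
      using real_part[OF has_field_derivative_Im[OF u1] has_field_derivative_Im[OF u2]]
      by (simp add: \<Delta>_def)
  qed
  moreover have "\<bar>Re \<Delta>\<bar> / h^2 \<le> cmod \<Delta> / h^2" "\<bar>Im \<Delta>\<bar> / h^2 \<le> cmod \<Delta> / h^2"
    by (intro divide_right_mono abs_Re_le_cmod abs_Im_le_cmod; simp)+
  ultimately have "cmod (u2 t) \<le> 2 * cmod \<Delta> / h^2 + 2 * I3"
    using cmod_le[of "u2 t"] by linarith
  then show ?thesis unfolding \<Delta>_def I3_def .
qed

lemma integrable_on_norm_u: "(\<lambda>x. cmod (u x)) integrable_on {a..b}"
  by (intro integrable_continuous_real continuous_intros continuous_on_subset[OF continuous_u]) auto

lemma integrable_on_norm_u2: "(\<lambda>x. cmod (u2 x)) integrable_on {a..b}"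
  by (intro integrable_continuous_real continuous_intros continuous_on_subset[OF continuous_u2]) auto

lemma integral_norm_u_shift:
  "integral {a..b} (\<lambda>s. cmod (u (s + c))) = integral {a + c..b + c} (\<lambda>x. cmod (u x))"
proof -
  have "(\<lambda>s. cmod (u (s + c))) = (\<lambda>x. cmod (u x)) \<circ> (+) c" by (auto simp: add.commute)
  then show ?thesis using integral_shift_Icc_real[of a b "\<lambda>x. cmod (u x)" c] by simp
qed

text \<open>Averaging the second-difference bound over \<open>s \<in> [a, a + h]\<close>.\<close>
lemma norm_u2_le_local_integrals:
  assumes h: "0 < h" and t: "t \<in> {a..a + 3 * h}"
  shows "cmod (u2 t) \<le> 8 * integral {a..a + 3 * h} (\<lambda>x. cmod (u x)) / h^3
    + 2 * integral {a..a + 3 * h} (\<lambda>x. cmod (u3 x))"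
proof -
  define I3 where "I3 = integral {a..a + 3 * h} (\<lambda>x. cmod (u3 x))"
  define I0 where "I0 = integral {a..a + 3 * h} (\<lambda>x. cmod (u x))"
  define D where "D s = cmod (u (s + 2 * h) - 2 * u (s + h) + u s)" for s
  define E where "E s = cmod (u (s + 2 * h)) + 2 * cmod (u (s + h)) + cmod (u s)" for s
  define c where "c = (cmod (u2 t) - 2 * I3) * h^2 / 2"
  have contD: "continuous_on UNIV D" and contE: "continuous_on UNIV E"
    unfolding D_def E_def by (intro continuous_intros continuous_on_compose2[OF continuous_u]; simp)+
  have "c \<le> D s" if "s \<in> {a..a + h}" for s
  proof -
    have "cmod (u2 t) \<le> 2 * D s / h^2 + 2 * I3"
      using norm_u2_le_second_difference[OF h t that] unfolding D_def I3_def .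
    then have "(cmod (u2 t) - 2 * I3) * h^2 \<le> 2 * D s" using h by (simp add: field_simps)
    then show ?thesis unfolding c_def by simp
  qed
  then have "h * c \<le> integral {a..a + h} D"
    using integral_le[of "\<lambda>s. c" "{a..a + h}" D] contD h
    by (auto intro: integrable_continuous_real continuous_on_subset)
  also have "\<dots> \<le> integral {a..a + h} E"
  proof (rule integral_le)
    show "D s \<le> E s" for s
      unfolding D_def E_def using norm_triangle_ineq[of "u (s + 2 * h) - 2 * u (s + h)" "u s"]
        norm_triangle_ineq4[of "u (s + 2 * h)" "2 * u (s + h)"] by (simp add: norm_mult)
  qed (use contD contE in \<open>auto intro: integrable_continuous_real continuous_on_subset\<close>)
  also have "\<dots> = integral {a..a + h} (\<lambda>s. cmod (u (s + 2 * h)))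
      + 2 * integral {a..a + h} (\<lambda>s. cmod (u (s + h))) + integral {a..a + h} (\<lambda>s. cmod (u s))"
  proof -
    have int: "(\<lambda>s. cmod (u (s + d))) integrable_on {a..a + h}" for d
      by (intro integrable_continuous_real continuous_intros continuous_on_compose2[OF continuous_u]) auto
    show ?thesis
      unfolding E_def using int[of "2 * h"] int[of h] int[of 0]
      by (simp add: integral_add integrable_add)
  qed
  also have "\<dots> \<le> I0 + 2 * I0 + I0"
  proof -
    have "integral {a + d..a + h + d} (\<lambda>x. cmod (u x)) \<le> I0" if "0 \<le> d" "d \<le> 2 * h" for d
      unfolding I0_def by (rule integral_subset_le) (use that in \<open>auto intro: integrable_on_norm_u\<close>)
    from this[of 0] this[of h] this[of "2 * h"] h show ?thesis
      unfolding integral_norm_u_shift by simp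
  qed
  finally have "(cmod (u2 t) - 2 * I3) * h^3 \<le> 8 * I0"
    unfolding c_def by (simp add: power3_eq_cube power2_eq_square field_simps)
  then show ?thesis
    using h unfolding I0_def I3_def by (simp add: field_simps)
qed

lemma integral_norm_u2_unit_le:
  assumes m: "0 < m"
  shows "integral {b..b + 1} (\<lambda>x. cmod (u2 x))
    \<le> 24 * (real m)^2 * integral {b..b + 3} (\<lambda>x. cmod (u x))
      + 6 / real m * integral {b..b + 3} (\<lambda>x. cmod (u3 x))"
proof -
  define h where "h = 1 / real m"
  have h: "0 < h" and mh: "real m * h = 1" using m by (auto simp: h_def)
  define I0 where "I0 j = integral {b + real j * h..b + real j * h + 3 * h} (\<lambda>x. cmod (u x))" for j
  define I3 where "I3 j = integral {b + real j * h..b + real j * h + 3 * h} (\<lambda>x. cmod (u3 x))" for j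
  have "integral {b..b + 1} (\<lambda>x. cmod (u2 x)) = integral {b..b + real m * h} (\<lambda>x. cmod (u2 x))"
    using mh by simp
  also have "\<dots> = (\<Sum>j<m. integral {b + real j * h..b + real (Suc j) * h} (\<lambda>x. cmod (u2 x)))"
    by (rule integral_Icc_eq_sum_uniform[OF integrable_on_norm_u2]) (use h in auto)
  also have "\<dots> \<le> (\<Sum>j<m. integral {b + real j * h..b + real (Suc j) * h} (\<lambda>x. 8 * I0 j / h^3 + 2 * I3 j))"
  proof (rule sum_mono, rule integral_le)
    fix j x assume "x \<in> {b + real j * h..b + real (Suc j) * h}"
    then have "x \<in> {b + real j * h..b + real j * h + 3 * h}" using h by (auto simp: algebra_simps)
    then show "cmod (u2 x) \<le> 8 * I0 j / h^3 + 2 * I3 j"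
      unfolding I0_def I3_def by (rule norm_u2_le_local_integrals[OF h])
  qed (auto intro: integrable_on_norm_u2)
  also have "\<dots> = (\<Sum>j<m. 8 / h^2 * I0 j + 2 * h * I3 j)"
    using h by (intro sum.cong) (simp_all add: power2_eq_square power3_eq_cube field_simps)
  also have "\<dots> = 8 / h^2 * (\<Sum>j<m. I0 j) + 2 * h * (\<Sum>j<m. I3 j)"
    by (simp add: sum_distrib_left sum.distrib)
  also have "\<dots> \<le> 8 / h^2 * (3 * integral {b..b + 3} (\<lambda>x. cmod (u x)))
      + 2 * h * (3 * integral {b..b + 3} (\<lambda>x. cmod (u3 x)))"
  proof -
    have "(\<Sum>j<m. integral {b + real j * h..b + real j * h + 3 * h} F) \<le> 3 * integral {b..b + 3} F"
      if F: "\<And>a b. F integrable_on {a..b}" "\<And>x. 0 \<le> F x" for F :: "real \<Rightarrow> real"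
    proof -
      have "h \<le> 1" using m by (simp add: h_def)
      then have "real (m + 2) * h \<le> 3" using mh by (simp add: algebra_simps)
      then have "integral {b..b + real (m + 2) * h} F \<le> integral {b..b + 3} F"
        using h F by (intro integral_subset_le) auto
      then show ?thesis using sum_integral_windows_le[OF F h, where k=m and c=b] by linarith
    qed
    from this[OF integrable_on_norm_u] this[OF integrable_on_norm_u3] h show ?thesis
      unfolding I0_def I3_def by (intro add_mono mult_left_mono) auto
  qed
  also have "\<dots> = 24 * (real m)^2 * integral {b..b + 3} (\<lambda>x. cmod (u x))
      + 6 / real m * integral {b..b + 3} (\<lambda>x. cmod (u3 x))"
    using m by (simp add: h_def field_simps power2_eq_square)
  finally show ?thesis .
qed

lemma integrable_on_weighted_squares:
  "(\<lambda>x. 12 * (1 + x^2)^3 * (cmod (u x))^2 + 3 * (cmod (u3 x))^2) integrable_on {a..b}"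
proof -
  have "(\<lambda>x. 12 * (1 + x^2)^3 * (cmod (u x))^2) integrable_on {a..b}"
    by (intro integrable_continuous_real continuous_intros continuous_on_subset[OF continuous_u]) auto
  then show ?thesis by (intro integrable_add) (simp_all add: integrable_on_square_u3)
qed

lemma integral_norm_u2_unit_le_weighted:
  assumes m: "0 < m" and m_le: "real m \<le> \<bar>r\<bar> + 1"
  shows "integral {r..r + 1} (\<lambda>x. cmod (u2 x))
    \<le> integral {r..r + 3} (\<lambda>x. 12 * (1 + x^2)^3 * (cmod (u x))^2 + 3 * (cmod (u3 x))^2)
      + 3 * (12 * 32^3 + 3) / (real m)^2"
proof -
  define P where "P x = 12 * (1 + x^2)^3 * (cmod (u x))^2 + 3 * (cmod (u3 x))^2" for x
  have P: "P integrable_on {r..r + 3}"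
    unfolding P_def by (rule integrable_on_weighted_squares)
  have int_u: "(\<lambda>x. 24 * (real m)^2 * cmod (u x)) integrable_on {r..r + 3}"
    using integrable_cmul[OF integrable_on_norm_u, of "24 * (real m)^2"] by simp
  have int_u3: "(\<lambda>x. 6 / real m * cmod (u3 x)) integrable_on {r..r + 3}"
    using integrable_cmul[OF integrable_on_norm_u3, of "6 / real m"] by simp
  have "integral {r..r + 1} (\<lambda>x. cmod (u2 x))
      \<le> 24 * (real m)^2 * integral {r..r + 3} (\<lambda>x. cmod (u x))
        + 6 / real m * integral {r..r + 3} (\<lambda>x. cmod (u3 x))"
    by (rule integral_norm_u2_unit_le[OF m])
  also have "\<dots> = integral {r..r + 3} (\<lambda>x. 24 * (real m)^2 * cmod (u x) + 6 / real m * cmod (u3 x))"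
    by (simp only: integral_add[OF int_u int_u3] integral_mult_right)
  also have "\<dots> \<le> integral {r..r + 3} (\<lambda>x. P x + (12 * 32^3 + 3) / (real m)^2)"
  proof (rule integral_le)
    fix x assume "x \<in> {r..r + 3}"
    then have "real m \<le> \<bar>x\<bar> + 4" using m_le by auto
    then show "24 * (real m)^2 * cmod (u x) + 6 / real m * cmod (u3 x) \<le> P x + (12 * 32^3 + 3) / (real m)^2"
      unfolding P_def using m by (intro weighted_amgm_bound square_le_weight) auto
  qed (intro integrable_add P integrable_const_ivl int_u int_u3)+
  also have "\<dots> = integral {r..r + 3} P + 3 * (12 * 32^3 + 3) / (real m)^2"
    by (subst integral_add[OF P integrable_const_ivl]) simp
  finally show ?thesis unfolding P_def .
qed

text \<open>The last term below is what remains of \<open>integral_norm_u2_unit_le_weighted\<close> with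
  \<open>m = \<lfloor>\<bar>r\<bar>\<rfloor> + 1\<close>, after \<open>m\<^sup>-\<^sup>2\<close> is bounded by \<open>5 / (1 + x\<^sup>2)\<close> on \<open>[r, r + 1]\<close>.\<close>
definition dominant :: "real \<Rightarrow> real" where
  "dominant x = 12 * (1 + x^2)^3 * (cmod (u x))^2 + 3 * (cmod (u3 x))^2 + 15 * (12 * 32^3 + 3) / (1 + x^2)"

lemma dominant_nonneg: "0 \<le> dominant x"
  unfolding dominant_def by (simp add: add_nonneg_nonneg)

lemma integrable_dominant: "integrable lborel dominant"
  unfolding dominant_def
  using weighted_square_integrable_u square_integrable_u3 integrable_inverse_one_plus_square
  by (simp add: divide_inverse mult.assoc)

lemma integral_norm_u2_unit_le_dominant:
  "integral {r..r + 1} (\<lambda>x. cmod (u2 x)) \<le> integral {r..r + 3} dominant"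
proof -
  define m where "m = nat \<lfloor>\<bar>r\<bar>\<rfloor> + 1"
  define c :: real where "c = 3 * (12 * 32^3 + 3)"
  have m: "0 < m" unfolding m_def by simp
  have "real m = of_int \<lfloor>\<bar>r\<bar>\<rfloor> + 1" unfolding m_def by simp
  then have m_lower: "\<bar>r\<bar> < real m" and m_upper: "real m \<le> \<bar>r\<bar> + 1"
    by linarith+
  define P where "P x = 12 * (1 + x^2)^3 * (cmod (u x))^2 + 3 * (cmod (u3 x))^2" for x
  define Q where "Q x = 5 * c / (1 + x^2)" for x
  have Q: "Q integrable_on {a..b}" for a b
    unfolding Q_def by (intro integrable_continuous_real continuous_intros) (auto simp: add_nonneg_eq_0_iff)
  have P: "P integrable_on {r..r + 3}"
    unfolding P_def by (rule integrable_on_weighted_squares)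
  have c: "0 \<le> c" by (simp add: c_def)
  have "c / (real m)^2 \<le> Q x" if "x \<in> {r..r + 1}" for x
    unfolding Q_def using inverse_square_le_weight[OF m_lower _ that c] m by simp
  then have "integral {r..r + 1} (\<lambda>x. c / (real m)^2) \<le> integral {r..r + 1} Q"
    by (intro integral_le Q integrable_const_ivl) auto
  then have "c / (real m)^2 \<le> integral {r..r + 1} Q"
    by simp
  also have "\<dots> \<le> integral {r..r + 3} Q"
    by (intro integral_subset_le Q) (auto simp: Q_def c_def)
  finally have Q_bound: "c / (real m)^2 \<le> integral {r..r + 3} Q" .
  have "integral {r..r + 1} (\<lambda>x. cmod (u2 x)) \<le> integral {r..r + 3} P + c / (real m)^2"
    using integral_norm_u2_unit_le_weighted[OF m m_upper] by (simp add: P_def[abs_def] c_def)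
  also have "\<dots> \<le> integral {r..r + 3} P + integral {r..r + 3} Q"
    using Q_bound by simp
  also have "\<dots> = integral {r..r + 3} dominant"
    using integral_add[OF P Q] by (simp add: dominant_def[abs_def] P_def[abs_def] Q_def[abs_def] c_def)
  finally show ?thesis .
qed

lemma integrable_u2: "integrable lborel u2"
proof -
  have "integrable lborel (\<lambda>x. cmod (u2 x))"
    by (rule integrable_lborel_if_window_integrals_le[OF _ _ integrable_dominant dominant_nonneg
          integral_norm_u2_unit_le_dominant])
       (auto intro!: continuous_intros continuous_u2)
  moreover have "u2 \<in> borel_measurable lborel"
    by (rule borel_measurable_lborel_if_continuous[OF continuous_u2])
  ultimately show ?thesis using integrable_norm_iff by blast
qed

lemma integrable_u: "integrable lborel u"
proof (rule Bochner_Integration.integrable_bound)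
  show "integrable lborel (\<lambda>x. ((1 + x^2)^3 * (cmod (u x))^2 + inverse (1 + x^2)) / 2)"
    using weighted_square_integrable_u integrable_inverse_one_plus_square by simp
  show "u \<in> borel_measurable lborel"
    by (rule borel_measurable_lborel_if_continuous[OF continuous_u])
  show "AE x in lborel. norm (u x) \<le> norm (((1 + x^2)^3 * (cmod (u x))^2 + inverse (1 + x^2)) / 2)"
  proof (intro AE_I2)
    fix x :: real
    define W where "W = (1 + x^2)^3"
    have "(1 + x^2)^1 \<le> (1 + x^2)^3" by (rule power_increasing) auto
    then have W1: "1 + x^2 \<le> W" unfolding W_def by simp
    then have W: "0 < W" using add_pos_nonneg[of 1 "x^2"] by simp
    have "2 * 1 * cmod (u x) \<le> W * (cmod (u x))^2 + 1^2 / W"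
      by (rule two_mult_le_weighted_squares[OF W])
    moreover have "1 / W \<le> inverse (1 + x^2)"
      using W1 by (simp add: divide_inverse le_imp_inverse_le add_pos_nonneg)
    moreover have "0 \<le> inverse (1 + x^2)" by (simp add: add_nonneg_nonneg)
    ultimately show "norm (u x) \<le> norm (((1 + x^2)^3 * (cmod (u x))^2 + inverse (1 + x^2)) / 2)"
      unfolding W_def by simp
  qed
qed

lemma bounded_u1: obtains B1 where "\<And>t. cmod (u1 t) \<le> B1"
proof -
  define K2 where "K2 = (\<integral>x. cmod (u2 x) \<partial>lborel)"
  define S where "S = (\<integral>x. (cmod (u1 x))^2 \<partial>lborel)"
  have ftc: "cmod (u1 s) \<le> cmod (u1 t) + K2" if "s \<le> t" for s t
  proof -
    have "(u2 has_integral (u1 t - u1 s)) {s..t}"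
      by (rule fundamental_theorem_of_calculus[OF that]) (auto intro: has_vector_derivative_at_within u2)
    then have "cmod (u1 t - u1 s) \<le> integral {s..t} (\<lambda>x. cmod (u2 x))"
      using integral_norm_bound_integral[of u2 "{s..t}" "\<lambda>x. cmod (u2 x)"] integrable_on_norm_u2
      by (auto simp: integral_unique intro!: integrable_continuous_real continuous_on_subset[OF continuous_u2])
    also have "\<dots> \<le> K2"
      unfolding K2_def using integrable_u2 by (intro integral_Icc_le_integral_lborel) auto
    finally show ?thesis using norm_triangle_ineq2[of "u1 s" "u1 t"] by (simp add: norm_minus_commute)
  qed
  have "cmod (u1 t) \<le> 1 + 2 * S + 2 * K2^2" for t
  proof -
    define c where "c = ((cmod (u1 t))^2 - 2 * K2^2) / 2"
    have "c \<le> (cmod (u1 s))^2" if "s \<in> {t..t + 1}" for s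
    proof -
      have "(cmod (u1 t))^2 \<le> (cmod (u1 s) + K2)^2"
        using ftc[of t s] that by (intro power_mono) auto
      also have "\<dots> \<le> 2 * (cmod (u1 s))^2 + 2 * K2^2"
        using sum_squares_ge_zero[of "cmod (u1 s) - K2" 0] by (simp add: power2_eq_square algebra_simps)
      finally show ?thesis unfolding c_def by simp
    qed
    then have "integral {t..t + 1} (\<lambda>s. c) \<le> integral {t..t + 1} (\<lambda>s. (cmod (u1 s))^2)"
      by (intro integral_le)
         (auto intro!: integrable_continuous_real continuous_intros continuous_on_subset[OF continuous_u1])
    also have "\<dots> \<le> S"
      unfolding S_def by (rule integral_Icc_le_integral_lborel[OF square_integrable_u1]) simp
    finally have "(cmod (u1 t))^2 \<le> 2 * S + 2 * K2^2" unfolding c_def by simp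
    moreover have "2 * cmod (u1 t) \<le> 1 + (cmod (u1 t))^2"
      using sum_squares_ge_zero[of "cmod (u1 t) - 1" 0] by (simp add: power2_eq_square algebra_simps)
    ultimately show ?thesis using norm_ge_zero[of "u1 t"] by linarith
  qed
  then show ?thesis using that by blast
qed

lemma bounded_u2: obtains B2 where "\<And>t. cmod (u2 t) \<le> B2"
proof -
  define A where "A = (\<integral>x. cmod (u x) \<partial>lborel)"
  define S3 where "S3 = (\<integral>x. (cmod (u3 x))^2 \<partial>lborel)"
  have "cmod (u2 t) \<le> 8 * A + 3 + S3" for t
  proof -
    have "cmod (u2 t) \<le> 8 * integral {t..t + 3 * 1} (\<lambda>x. cmod (u x)) / 1^3
        + 2 * integral {t..t + 3 * 1} (\<lambda>x. cmod (u3 x))"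
      by (rule norm_u2_le_local_integrals) auto
    moreover have "integral {t..t + 3} (\<lambda>x. cmod (u x)) \<le> A"
      unfolding A_def using integrable_u by (intro integral_Icc_le_integral_lborel) auto
    moreover have "integral {t..t + 3} (\<lambda>x. cmod (u3 x)) \<le> integral {t..t + 3} (\<lambda>x. 1/2 + (cmod (u3 x))^2 / 2)"
    proof (rule integral_le[OF integrable_on_norm_u3])
      show "(\<lambda>x. 1/2 + (cmod (u3 x))^2 / 2) integrable_on {t..t + 3}"
        using integrable_on_square_u3 by (intro integrable_add integrable_const_ivl) simp
      show "cmod (u3 x) \<le> 1/2 + (cmod (u3 x))^2 / 2" for x
        using sum_squares_ge_zero[of "cmod (u3 x) - 1" 0] by (simp add: power2_eq_square algebra_simps)
    qed
    moreover have "integral {t..t + 3} (\<lambda>x. 1/2 + (cmod (u3 x))^2 / 2)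
        = 3/2 + integral {t..t + 3} (\<lambda>x. (cmod (u3 x))^2) / 2"
      using integrable_on_square_u3 by (subst integral_add) auto
    moreover have "integral {t..t + 3} (\<lambda>x. (cmod (u3 x))^2) \<le> S3"
      unfolding S3_def by (rule integral_Icc_le_integral_lborel[OF square_integrable_u3]) simp
    ultimately show ?thesis by simp
  qed
  then show ?thesis using that by blast
qed

lemma volterra_setting:
  "\<exists>B. volterra_setting u (\<lambda>x. cnj (u2 x) + (\<i>/2) * complex_of_real ((cmod (u1 x))^2) * cnj (u1 x)) B"
proof -
  define ut where "ut x = cnj (u2 x) + (\<i>/2) * complex_of_real ((cmod (u1 x))^2) * cnj (u1 x)" for x
  obtain B1 where B1: "\<And>t. cmod (u1 t) \<le> B1" using bounded_u1 by blast
  obtain B2 where B2: "\<And>t. cmod (u2 t) \<le> B2" using bounded_u2 by blast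
  have B1_nonneg: "0 \<le> B1" using order_trans[OF norm_ge_zero B1] .
  have continuous_ut: "continuous_on UNIV ut"
    unfolding ut_def by (intro continuous_intros continuous_u1 continuous_u2)
  have norm_ut: "cmod (ut x) \<le> cmod (u2 x) + B1 / 2 * (cmod (u1 x))^2" for x
  proof -
    have "cmod ((\<i>/2) * complex_of_real ((cmod (u1 x))^2) * cnj (u1 x)) = (cmod (u1 x))^2 * cmod (u1 x) / 2"
      by (simp add: norm_mult norm_divide norm_power)
    then have "cmod (ut x) \<le> cmod (u2 x) + (cmod (u1 x))^2 * cmod (u1 x) / 2"
      unfolding ut_def
      using norm_triangle_ineq[of "cnj (u2 x)" "(\<i>/2) * complex_of_real ((cmod (u1 x))^2) * cnj (u1 x)"]
      by simp
    also have "\<dots> \<le> cmod (u2 x) + (cmod (u1 x))^2 * B1 / 2"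
      by (intro add_left_mono divide_right_mono mult_left_mono B1) auto
    finally show ?thesis by (simp add: mult_ac)
  qed
  have "integrable lborel ut"
  proof (rule Bochner_Integration.integrable_bound)
    show "integrable lborel (\<lambda>x. cmod (u2 x) + B1 / 2 * (cmod (u1 x))^2)"
      using integrable_u2 square_integrable_u1 by simp
    show "AE x in lborel. norm (ut x) \<le> norm (cmod (u2 x) + B1 / 2 * (cmod (u1 x))^2)"
      using norm_ut B1_nonneg by (intro AE_I2) (simp add: order_trans[OF _ abs_ge_self])
  qed (rule borel_measurable_lborel_if_continuous[OF continuous_ut])
  moreover have "cmod (ut x) \<le> B2 + B1 / 2 * B1^2" for x
  proof -
    have "B1 / 2 * (cmod (u1 x))^2 \<le> B1 / 2 * B1^2"
      using B1_nonneg B1[of x] by (intro mult_left_mono power_mono) auto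
    then show ?thesis using norm_ut[of x] B2[of x] by linarith
  qed
  ultimately have "volterra_setting u ut (B2 + B1 / 2 * B1^2)"
    using continuous_u continuous_ut integrable_u by unfold_locales auto
  then show ?thesis unfolding ut_def by blast
qed

end

lemma volterra_setting_if_H33:
  assumes "H33 u"
  obtains B where "volterra_setting u (utilde u) B"
proof -
  obtain u3 where u3: "sq_int u3"
    "\<And>a b. a \<le> b \<Longrightarrow> set_integrable lborel {a..b} u3 \<and> d2 u b - d2 u a = set_lebesgue_integral lborel {a..b} u3"
    using assms unfolding H33_def by blast
  have "(cmod (complex_of_real ((1 + x^2) powr (3/2)) * u x))^2 = (1 + x^2)^3 * (cmod (u x))^2" for x :: real
  proof -
    have "((1 + x^2) powr (3/2))^2 = (1 + x^2) powr (real 3)"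
      by (simp add: power2_eq_square powr_add[symmetric])
    also have "\<dots> = (1 + x^2)^3" by (rule powr_realpow) (simp add: add_pos_nonneg)
    finally show ?thesis by (simp add: norm_mult power_mult_distrib)
  qed
  then interpret regular_potential u "d1 u" "d2 u" u3
    using assms u3 by unfold_locales (auto simp: H33_def sq_int_def)
  have "utilde u = (\<lambda>x. cnj (d2 u x) + (\<i>/2) * complex_of_real ((cmod (d1 u x))^2) * cnj (d1 u x))"
    by (simp add: utilde_def fun_eq_iff)
  then show ?thesis using volterra_setting that by auto
qed

theorem lemma7:
  fixes u :: "real \<Rightarrow> complex"
  assumes "H33 u"
  shows "\<exists>Lk :: real \<Rightarrow> real \<Rightarrow> complex \<Rightarrow> complex.
    (\<forall>k\<in>Kdom.
       (\<forall>f. C0p f \<longrightarrow> C0p (Top u k f)) \<and>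
       (\<exists>R :: (real \<Rightarrow> complex) \<Rightarrow> real \<Rightarrow> complex.
          (\<forall>f. C0p f \<longrightarrow> C0p (R f)) \<and>
          (\<forall>f g c. C0p f \<longrightarrow> C0p g \<longrightarrow>
              (\<forall>x\<ge>0. R (\<lambda>y. f y + c * g y) x = R f x + c * R g x)) \<and>
          (\<exists>C. \<forall>f. C0p f \<longrightarrow> supn (R f) \<le> C * supn f) \<and>
          (\<forall>f. C0p f \<longrightarrow> (\<forall>x\<ge>0. R f x - Top u k (R f) x = f x)) \<and>
          (\<forall>f. C0p f \<longrightarrow> (\<forall>x\<ge>0. R (\<lambda>y. f y - Top u k f y) x = f x)) \<and>
          (\<forall>f. C0p f \<longrightarrow> (\<forall>x\<ge>0.
              set_integrable lborel {0..} (\<lambda>y. Lk x y k * f y) \<and>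
              R f x - f x = set_lebesgue_integral lborel {0..} (\<lambda>y. Lk x y k * f y)))) \<and>
       (\<forall>x y. 0 \<le> y \<longrightarrow> y < x \<longrightarrow> Lk x y k = 0) \<and>
       (\<forall>x\<ge>0. \<forall>y\<ge>0. cmod (Lk x y k) \<le>
          exp (W11norm u * L1norm (utilde u)) * W11norm u * cmod (utilde u y))) \<and>
    continuous_on {(x, y, k). 0 \<le> x \<and> x < y \<and> k \<in> Kdom} (\<lambda>(x, y, k). Lk x y k)"
proof -
  obtain B where "volterra_setting u (utilde u) B"
    using volterra_setting_if_H33[OF assms] .
  then interpret volterra_setting u "utilde u" B .
  have Top: "Top u k = volterra_op k" for k
    by (simp add: fun_eq_iff Top_def volterra_op_def phase_def)
  have \<kappa>_le: "\<kappa> \<le> W11norm u"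
    using L1norm_nonneg[of u] L1norm_nonneg[of "d1 u"] by (simp add: \<kappa>_def W11norm_def)
  show ?thesis
    apply (intro exI[of _ resolvent_kernel] conjI ballI)
    subgoal
      using C0p_volterra_op by (simp add: Top)
    subgoal for k
      apply (intro exI[of _ "resolvent k"] conjI allI impI
          exI[of _ "1 + \<kappa> * exp (\<kappa> * L1norm (utilde u)) * L1norm (utilde u)"])
      apply (simp_all add: Top C0p_resolvent resolvent_add_scaled supn_resolvent_le resolvent_solves
          resolvent_of_solution set_integrable_kernel_op[OF admissible_resolvent_kernel])
      by (simp add: resolvent_def kernel_op_def)
    subgoal
      by (simp add: resolvent_kernel_eq_0)
    subgoal
      using norm_resolvent_kernel_le_exp[OF _ \<kappa>_le] by blast
    by (rule continuous_on_subset[OF continuous_resolvent_kernel]) auto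
qed

end
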